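(* Assume A2. Let $0w1$ be a valid word (with $w$ a possibly empty word). Then for $x\in\mathcal I$: $0w1$ is the $x$-threshold word if and only if $x\in[y_{01w},y_{10w}]$. Moreover, if $x\in\mathcal I$ and $x\ge y_0$, then the $x$-threshold word is $0$; if $x\in\mathcal I$ and $x\le y_1$, then the $x$-threshold word is $1$.
   Context: Words are finite strings over $\{0,1\}$; $\epsilon$ is the empty word, $w^\omega$ the infinite repetition of $w$. Let $\mathcal I\subseteq\mathbb R$ be an interval and $\phi_0,\phi_1:\mathcal I\to\mathcal I$. For a word $w$ put $\phi_w:=\phi_{w_{|w|}}\circ\cdots\circ\phi_{w_1}$ (first letter applied first), $\phi_\epsilon=\mathrm{id}$. Assumption A2: for all $x<y$ in $\mathcal I$ and $k\in\{0,1\}$, $\phi_k(x)<\phi_k(y)$ and $\phi_k(y)-\phi_k(x)<y-x$; moreover $\phi_0,\phi_1$ have fixed points $y_0,y_1\in\mathcal I$ with $y_1<y_0$. Under A2, for every non-empty word $u$ the map $\phi_u$ has a unique fixed point in $\mathcal I$, denoted $y_u$. The $x$-threshold orbit is the sequence $(x_k)_{k\ge1}$ with $x_1=\phi_1(x)$ and $x_{k+1}=\phi_1(x_k)$ if $x_k\ge x$, $x_{k+1}=\phi_0(x_k)$ if $x_k<x$. The $x$-threshold word is the shortest non-empty finite word $\pi$ such that $x_{k+1}=\phi_{(\pi^\omega)_k}(x_k)$ for all $k\ge1$, when such a word exists. For $p\ge1$, $L_p,R_p$ are the word morphisms determined by $L_p(0)=0^{p+1}1$, $L_p(1)=0^p1$,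 $R_p(0)=01^p$, $R_p(1)=01^{p+1}$. The set of valid words is the smallest set of words containing $0$ and $1$ and closed under $L_p$ and $R_p$ for all $p\ge1$; every valid word other than $0,1$ has the form $0w1$. *)

theory Defs
  imports "HOL-Analysis.Analysis"
begin

text \<open>Words over {0,1} are encoded as bool lists: False = letter 0, True = letter 1.
  The two maps are given as one function phi :: bool => real => real,
  phi False = phi_0, phi True = phi_1.\<close>

type_synonym word = "bool list"

text \<open>phi_w = phi_{w_n} o ... o phi_{w_1} (first letter applied first).\<close>
fun phiw :: "(bool \<Rightarrow> real \<Rightarrow> real) \<Rightarrow> word \<Rightarrow> real \<Rightarrow> real" where
  "phiw phi [] = id"
| "phiw phi (a # w) = phiw phi w \<circ> phi a"

definition A2 :: "real set \<Rightarrow> (bool \<Rightarrow> real \<Rightarrow> real) \<Rightarrow> real \<Rightarrow> real \<Rightarrow> bool" where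
  "A2 I phi y0 y1 \<longleftrightarrow>
     is_interval I \<and>
     (\<forall>k. phi k ` I \<subseteq> I) \<and>
     (\<forall>k. \<forall>x\<in>I. \<forall>y\<in>I. x < y \<longrightarrow> phi k x < phi k y \<and> phi k y - phi k x < y - x) \<and>
     y0 \<in> I \<and> y1 \<in> I \<and> phi False y0 = y0 \<and> phi True y1 = y1 \<and> y1 < y0"

text \<open>y_u: the (unique, under A2) fixed point of phi_u in I.\<close>
definition fixpt :: "real set \<Rightarrow> (bool \<Rightarrow> real \<Rightarrow> real) \<Rightarrow> word \<Rightarrow> real" where
  "fixpt I phi u = (THE y. y \<in> I \<and> phiw phi u y = y)"

text \<open>x-threshold orbit: thr_orbit phi x k = x_k for k >= 1 (x_0 = x, so that x_1 = phi_1 x).\<close>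
fun thr_orbit :: "(bool \<Rightarrow> real \<Rightarrow> real) \<Rightarrow> real \<Rightarrow> nat \<Rightarrow> real" where
  "thr_orbit phi x 0 = x"
| "thr_orbit phi x (Suc k) = phi (x \<le> thr_orbit phi x k) (thr_orbit phi x k)"

text \<open>pi generates the orbit: x_{k+1} = phi_{(pi^omega)_k}(x_k) for all k >= 1
  ((pi^omega)_k is the k-th letter, 1-indexed).\<close>
definition generates :: "(bool \<Rightarrow> real \<Rightarrow> real) \<Rightarrow> real \<Rightarrow> word \<Rightarrow> bool" where
  "generates phi x p \<longleftrightarrow> p \<noteq> [] \<and>
     (\<forall>k\<ge>1. thr_orbit phi x (Suc k) = phi (p ! ((k - 1) mod length p)) (thr_orbit phi x k))"

definition is_threshold_word :: "(bool \<Rightarrow> real \<Rightarrow> real) \<Rightarrow> real \<Rightarrow> word \<Rightarrow> bool" where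
  "is_threshold_word phi x p \<longleftrightarrow> generates phi x p \<and>
     (\<forall>q. generates phi x q \<and> q \<noteq> p \<longrightarrow> length p < length q)"

definition Lmor :: "nat \<Rightarrow> word \<Rightarrow> word" where
  "Lmor p w = concat (map (\<lambda>b. if b then replicate p False @ [True]
                                   else replicate (p + 1) False @ [True]) w)"

definition Rmor :: "nat \<Rightarrow> word \<Rightarrow> word" where
  "Rmor p w = concat (map (\<lambda>b. if b then False # replicate (p + 1) True
                                   else False # replicate p True) w)"

inductive valid :: "word \<Rightarrow> bool" where
  valid0: "valid [False]"
| valid1: "valid [True]"
| validL: "valid w \<Longrightarrow> p \<ge> 1 \<Longrightarrow> valid (Lmor p w)"
| validR: "valid w \<Longrightarrow> p \<ge> 1 \<Longrightarrow> valid (Rmor p w)"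

end

theory Submission
  imports Defs
begin

text \<open>
  Both maps are increasing contractions that keep the segment \<open>[y\<^sub>1, y\<^sub>0]\<close> invariant, so
  every composition \<open>\<phi>\<^sub>u\<close> has a unique attracting fixed point \<open>y\<^sub>u\<close> there.
  The threshold orbit of \<open>x\<close> follows the pattern \<open>(10w)\<^sup>\<omega>\<close> exactly when
  \<open>y\<^sub>0\<^sub>1\<^sub>w \<le> x \<le> y\<^sub>1\<^sub>0\<^sub>w\<close>: for the words \<open>0\<^sup>q1\<close> and \<open>01\<^sup>q\<close> this is a direct
  comparison with the fixed points, and for \<open>L\<^sub>p(v)\<close>, \<open>R\<^sub>p(v)\<close> one renormalises:
  the pair \<open>(\<phi>\<^bsub>B\<^sub>0\<^esub>, \<phi>\<^bsub>B\<^sub>1\<^esub>)\<close> formed from the two blocks of the morphism again satisfies A2,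
  and the map \<open>\<phi>\<^sub>T\<close> for the common prefix \<open>T\<close> of the blocks carries its threshold dynamics
  over to that of \<open>\<phi>\<close>, which reduces the claim to \<open>v\<close>.  The numbers of zeros and ones
  of a valid word are coprime, so a valid word is primitive and hence the shortest period
  of a pattern it generates.  Finally, beyond \<open>y\<^sub>0\<close> (below \<open>y\<^sub>1\<close>) the orbit never
  returns above (below) the threshold, and the words \<open>0\<close> and \<open>1\<close> cannot both generate
  an orbit because the iterates of \<open>\<phi>\<^sub>0\<close> and \<open>\<phi>\<^sub>1\<close> converge to different limits.
\<close>

lemma phiw_append [simp]: "phiw phi (u @ v) = phiw phi v \<circ> phiw phi u"
  by (induction u) auto

locale a2_system =
  fixes I :: "real set" and phi :: "bool \<Rightarrow> real \<Rightarrow> real" and y0 y1 :: real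
  assumes A2: "A2 I phi y0 y1"
begin

lemma interval_I: "is_interval I"
  and phi_in_I: "z \<in> I \<Longrightarrow> phi c z \<in> I"
  and phi_strict_mono: "x \<in> I \<Longrightarrow> y \<in> I \<Longrightarrow> x < y \<Longrightarrow> phi c x < phi c y"
  and phi_contracts: "x \<in> I \<Longrightarrow> y \<in> I \<Longrightarrow> x < y \<Longrightarrow> phi c y - phi c x < y - x"
  and y0_in_I: "y0 \<in> I" and y1_in_I: "y1 \<in> I"
  and phi0_y0: "phi False y0 = y0" and phi1_y1: "phi True y1 = y1"
  and y1_less_y0: "y1 < y0"
  using A2 unfolding A2_def by auto

lemma in_I_between: "a \<in> I \<Longrightarrow> c \<in> I \<Longrightarrow> a \<le> b \<Longrightarrow> b \<le> c \<Longrightarrow> b \<in> I"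
  using mem_is_interval_1_I[OF interval_I] by blast

lemma in_I_if_in_box: "y1 \<le> z \<Longrightarrow> z \<le> y0 \<Longrightarrow> z \<in> I"
  using in_I_between[OF y1_in_I y0_in_I] by blast

lemma phiw_in_I: "z \<in> I \<Longrightarrow> phiw phi u z \<in> I"
  by (induction u arbitrary: z) (auto simp: phi_in_I)

lemma phiw_strict_mono: "x \<in> I \<Longrightarrow> y \<in> I \<Longrightarrow> x < y \<Longrightarrow> phiw phi u x < phiw phi u y"
  by (induction u arbitrary: x y) (auto simp: phi_in_I phi_strict_mono)

lemma phiw_le_iff: "x \<in> I \<Longrightarrow> y \<in> I \<Longrightarrow> phiw phi u x \<le> phiw phi u y \<longleftrightarrow> x \<le> y"
  using phiw_strict_mono[of x y u] phiw_strict_mono[of y x u]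
  by (cases x y rule: linorder_cases) auto

lemma phiw_mono: "x \<in> I \<Longrightarrow> y \<in> I \<Longrightarrow> x \<le> y \<Longrightarrow> phiw phi u x \<le> phiw phi u y"
  using phiw_le_iff by blast

lemma phiw_nonexpanding: "x \<in> I \<Longrightarrow> y \<in> I \<Longrightarrow> x < y \<Longrightarrow> phiw phi u y - phiw phi u x \<le> y - x"
proof (induction u arbitrary: x y)
  case (Cons c u)
  have "phi c x < phi c y" "phi c y - phi c x < y - x"
    using Cons.prems phi_strict_mono phi_contracts by auto
  moreover have "phi c x \<in> I" "phi c y \<in> I" using Cons.prems phi_in_I by auto
  ultimately show ?case using Cons.IH[of "phi c x" "phi c y"] by simp
qed simp

lemma phiw_contracts:
  assumes "x \<in> I" "y \<in> I" "x < y" "u \<noteq> []"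
  shows "phiw phi u y - phiw phi u x < y - x"
proof -
  obtain c u' where u: "u = c # u'" using \<open>u \<noteq> []\<close> by (cases u) auto
  have "phi c x < phi c y" "phi c y - phi c x < y - x"
    using assms phi_strict_mono phi_contracts by auto
  moreover have "phi c x \<in> I" "phi c y \<in> I" using assms phi_in_I by auto
  ultimately show ?thesis using phiw_nonexpanding[of "phi c x" "phi c y" u'] u by simp
qed

lemma phiw_lipschitz: "1-lipschitz_on I (phiw phi u)"
proof (rule lipschitz_onI)
  fix x y assume xy: "x \<in> I" "y \<in> I"
  show "dist (phiw phi u x) (phiw phi u y) \<le> 1 * dist x y"
  proof (cases x y rule: linorder_cases)
    case less
    then show ?thesis using phiw_nonexpanding[OF xy less, of u] phiw_strict_mono[OF xy less, of u]
      by (simp add: dist_real_def)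
  next
    case greater
    then show ?thesis using phiw_nonexpanding[OF xy(2,1) greater, of u] phiw_strict_mono[OF xy(2,1) greater, of u]
      by (simp add: dist_real_def)
  qed simp
qed simp

lemma phiw_continuous_on: "S \<subseteq> I \<Longrightarrow> continuous_on S (phiw phi u)"
  using lipschitz_on_continuous_on lipschitz_on_subset phiw_lipschitz by blast

lemma phi0_ge: "z \<in> I \<Longrightarrow> z \<le> y0 \<Longrightarrow> z \<le> phi False z"
  using phi_contracts[of z y0 False] phi0_y0 y0_in_I by (cases "z = y0") auto

lemma phi0_gt: "z \<in> I \<Longrightarrow> z < y0 \<Longrightarrow> z < phi False z"
  using phi_contracts[of z y0 False] phi0_y0 y0_in_I by auto

lemma phi0_le: "z \<in> I \<Longrightarrow> y0 \<le> z \<Longrightarrow> phi False z \<le> z"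
  using phi_contracts[of y0 z False] phi0_y0 y0_in_I by (cases "z = y0") auto

lemma phi1_le: "z \<in> I \<Longrightarrow> y1 \<le> z \<Longrightarrow> phi True z \<le> z"
  using phi_contracts[of y1 z True] phi1_y1 y1_in_I by (cases "z = y1") auto

lemma phi1_less: "z \<in> I \<Longrightarrow> y1 < z \<Longrightarrow> phi True z < z"
  using phi_contracts[of y1 z True] phi1_y1 y1_in_I by auto

lemma phi1_ge: "z \<in> I \<Longrightarrow> z \<le> y1 \<Longrightarrow> z \<le> phi True z"
  using phi_contracts[of z y1 True] phi1_y1 y1_in_I by (cases "z = y1") auto

lemma phi_in_box:
  assumes "y1 \<le> z" "z \<le> y0"
  shows "y1 \<le> phi c z \<and> phi c z \<le> y0"
proof -
  have zI: "z \<in> I" using in_I_if_in_box assms .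
  have "y1 \<le> phi True z" "phi False z \<le> y0"
    using phiw_mono[OF y1_in_I zI assms(1), of "[True]"] phiw_mono[OF zI y0_in_I assms(2), of "[False]"]
      phi0_y0 phi1_y1 by auto
  moreover have "phi True z \<le> z" "z \<le> phi False z" using phi1_le[OF zI] phi0_ge[OF zI] assms by auto
  ultimately show ?thesis using assms by (cases c) auto
qed

lemma phiw_in_box: "y1 \<le> z \<Longrightarrow> z \<le> y0 \<Longrightarrow> y1 \<le> phiw phi u z \<and> phiw phi u z \<le> y0"
  by (induction u arbitrary: z) (auto dest: phi_in_box)

lemma phi1_less_phi0:
  assumes "y1 \<le> z" "z \<le> y0"
  shows "phi True z < phi False z"
proof (cases "z = y1")
  case True
  then show ?thesis using phi1_y1 phi0_gt[OF y1_in_I y1_less_y0] by simp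
next
  case False
  then have "phi True z < z" using phi1_less in_I_if_in_box assms by auto
  then show ?thesis using phi0_ge in_I_if_in_box assms by fastforce
qed

lemma phiw_replicate0_mono:
  assumes "y1 \<le> z" "z \<le> y0" "i \<le> j"
  shows "phiw phi (replicate i False) z \<le> phiw phi (replicate j False) z"
proof -
  have step: "y1 \<le> t \<Longrightarrow> t \<le> y0 \<Longrightarrow> t \<le> phiw phi (replicate k False) t" for t k
  proof (induction k arbitrary: t)
    case (Suc k)
    have "t \<le> phi False t" using phi0_ge in_I_if_in_box Suc.prems by auto
    moreover have "phi False t \<le> phiw phi (replicate k False) (phi False t)"
      using Suc.IH phi_in_box Suc.prems by blast
    ultimately show ?case by simp
  qed simp
  obtain k where "j = i + k" using le_Suc_ex \<open>i \<le> j\<close> by blast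
  then show ?thesis using step[of "phiw phi (replicate i False) z" k] phiw_in_box[OF assms(1,2)]
    by (simp add: replicate_add)
qed

lemma phiw_replicate1_antimono:
  assumes "y1 \<le> z" "z \<le> y0" "i \<le> j"
  shows "phiw phi (replicate j True) z \<le> phiw phi (replicate i True) z"
proof -
  have step: "y1 \<le> t \<Longrightarrow> t \<le> y0 \<Longrightarrow> phiw phi (replicate k True) t \<le> t" for t k
  proof (induction k arbitrary: t)
    case (Suc k)
    have "phi True t \<le> t" using phi1_le in_I_if_in_box Suc.prems by auto
    moreover have "phiw phi (replicate k True) (phi True t) \<le> phi True t"
      using Suc.IH phi_in_box Suc.prems by blast
    ultimately show ?case by simp
  qed simp
  obtain k where "j = i + k" using le_Suc_ex \<open>i \<le> j\<close> by blast
  then show ?thesis using step[of "phiw phi (replicate i True) z" k] phiw_in_box[OF assms(1,2)]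
    by (simp add: replicate_add)
qed

end

section \<open>Fixed points of compositions\<close>

context a2_system
begin

lemma fixed_point_exists_in_box:
  assumes "u \<noteq> []"
  shows "\<exists>z. y1 \<le> z \<and> z \<le> y0 \<and> phiw phi u z = z"
proof -
  let ?f = "\<lambda>z. z - phiw phi u z"
  have "continuous_on {y1..y0} ?f"
    by (intro continuous_intros phiw_continuous_on) (use in_I_if_in_box in auto)
  moreover have "?f y1 \<le> 0" "0 \<le> ?f y0" using phiw_in_box[of y1 u] phiw_in_box[of y0 u] y1_less_y0 by auto
  ultimately obtain z where "y1 \<le> z" "z \<le> y0" "?f z = 0"
    using IVT'[of ?f y1 0 y0] y1_less_y0 by auto
  then show ?thesis by auto
qed

lemma fixed_point_unique:
  "u \<noteq> [] \<Longrightarrow> z \<in> I \<Longrightarrow> z' \<in> I \<Longrightarrow> phiw phi u z = z \<Longrightarrow> phiw phi u z' = z' \<Longrightarrow> z = z'"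
  using phiw_contracts[of z z' u] phiw_contracts[of z' z u] by (cases z z' rule: linorder_cases) auto

lemma fixpt_in_box_and_fixed:
  assumes "u \<noteq> []"
  shows "y1 \<le> fixpt I phi u \<and> fixpt I phi u \<le> y0 \<and> phiw phi u (fixpt I phi u) = fixpt I phi u"
proof -
  obtain z where z: "y1 \<le> z" "z \<le> y0" "phiw phi u z = z"
    using fixed_point_exists_in_box assms by blast
  have "fixpt I phi u = z" unfolding fixpt_def
    using fixed_point_unique[OF assms] in_I_if_in_box z by (intro the_equality) auto
  then show ?thesis using z by auto
qed

lemma fixpt_ge_y1: "u \<noteq> [] \<Longrightarrow> y1 \<le> fixpt I phi u"
  and fixpt_le_y0: "u \<noteq> [] \<Longrightarrow> fixpt I phi u \<le> y0"
  and phiw_fixpt: "u \<noteq> [] \<Longrightarrow> phiw phi u (fixpt I phi u) = fixpt I phi u"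
  using fixpt_in_box_and_fixed by blast+

lemma fixpt_in_I: "u \<noteq> [] \<Longrightarrow> fixpt I phi u \<in> I"
  using fixpt_ge_y1 fixpt_le_y0 in_I_if_in_box by blast

lemma fixpt_eqI: "u \<noteq> [] \<Longrightarrow> z \<in> I \<Longrightarrow> phiw phi u z = z \<Longrightarrow> fixpt I phi u = z"
  using fixed_point_unique fixpt_in_I phiw_fixpt by blast

text \<open>Since \<open>\<phi>\<^sub>u\<close> is a contraction, \<open>z - \<phi>\<^sub>u z\<close> changes sign only at the fixed point.\<close>

lemma le_phiw_iff_le_fixpt:
  assumes "u \<noteq> []" "z \<in> I"
  shows "z \<le> phiw phi u z \<longleftrightarrow> z \<le> fixpt I phi u"
  using phiw_contracts[of z "fixpt I phi u" u] phiw_contracts[of "fixpt I phi u" z u]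
    phiw_fixpt[of u] fixpt_in_I[of u] assms
  by (cases z "fixpt I phi u" rule: linorder_cases) auto

lemma less_phiw_iff_less_fixpt:
  assumes "u \<noteq> []" "z \<in> I"
  shows "z < phiw phi u z \<longleftrightarrow> z < fixpt I phi u"
  using phiw_contracts[of z "fixpt I phi u" u] phiw_contracts[of "fixpt I phi u" z u]
    phiw_fixpt[of u] fixpt_in_I[of u] assms
  by (cases z "fixpt I phi u" rule: linorder_cases) auto

lemma phiw_le_if_fixpt_le:
  assumes "u \<noteq> []" "z \<in> I" "fixpt I phi u \<le> z"
  shows "phiw phi u z \<le> z"
proof (cases "fixpt I phi u = z")
  case True
  then show ?thesis using phiw_fixpt[OF assms(1)] by simp
next
  case False
  then show ?thesis using le_phiw_iff_le_fixpt[OF assms(1,2)] assms(3) by auto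
qed

lemma fixpt_rotate:
  assumes "u @ v \<noteq> []"
  shows "fixpt I phi (v @ u) = phiw phi u (fixpt I phi (u @ v))"
proof (rule fixpt_eqI)
  show "v @ u \<noteq> []" using assms by auto
  show "phiw phi u (fixpt I phi (u @ v)) \<in> I" using phiw_in_I fixpt_in_I assms by blast
  show "phiw phi (v @ u) (phiw phi u (fixpt I phi (u @ v))) = phiw phi u (fixpt I phi (u @ v))"
    using phiw_fixpt[OF assms] by simp
qed

lemma phiw_y0_less: "True \<in> set u \<Longrightarrow> phiw phi u y0 < y0"
proof (induction u)
  case (Cons c u)
  show ?case
  proof (cases c)
    case True
    have "phiw phi u (phi True y0) < phiw phi u y0"
      using phiw_strict_mono phi_in_I y0_in_I phi1_less[OF y0_in_I y1_less_y0] by blast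
    moreover have "phiw phi u y0 \<le> y0" using phiw_in_box[of y0 u] y1_less_y0 by auto
    ultimately show ?thesis using True by simp
  next
    case False
    then show ?thesis using Cons phi0_y0 by simp
  qed
qed simp

lemma phiw_y1_greater: "False \<in> set u \<Longrightarrow> y1 < phiw phi u y1"
proof (induction u)
  case (Cons c u)
  show ?case
  proof (cases c)
    case False
    have "phiw phi u y1 < phiw phi u (phi False y1)"
      using phiw_strict_mono phi_in_I y1_in_I phi0_gt[OF y1_in_I y1_less_y0] by blast
    moreover have "y1 \<le> phiw phi u y1" using phiw_in_box[of y1 u] y1_less_y0 by auto
    ultimately show ?thesis using False by simp
  next
    case True
    then show ?thesis using Cons phi1_y1 by simp
  qed
qed simp

lemma fixpt_less_y0: "True \<in> set u \<Longrightarrow> fixpt I phi u < y0"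
  using phiw_y0_less phiw_fixpt fixpt_le_y0 by (metis empty_iff empty_set order_less_le)

lemma fixpt_greater_y1: "False \<in> set u \<Longrightarrow> y1 < fixpt I phi u"
  using phiw_y1_greater phiw_fixpt fixpt_ge_y1 by (metis empty_iff empty_set order_less_le)

lemma limit_of_iterates_is_fixpt:
  assumes "u \<noteq> []" "L \<in> I" "\<And>m. (phiw phi u ^^ m) z \<in> I"
    and lim: "(\<lambda>m. (phiw phi u ^^ m) z) \<longlonglongrightarrow> L"
  shows "L = fixpt I phi u"
proof -
  have "(\<lambda>m. phiw phi u ((phiw phi u ^^ m) z)) \<longlonglongrightarrow> phiw phi u L"
    using continuous_on_tendsto_compose[OF phiw_continuous_on[OF order_refl] lim \<open>L \<in> I\<close>] assms(3)
    by auto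
  moreover have "(\<lambda>m. phiw phi u ((phiw phi u ^^ m) z)) \<longlonglongrightarrow> L"
    using LIMSEQ_Suc[OF lim] by simp
  ultimately have "phiw phi u L = L" using LIMSEQ_unique by blast
  then show ?thesis using fixpt_eqI assms(1,2) by simp
qed

text \<open>The iterates move monotonically towards the fixed point without crossing it.\<close>

lemma iterates_tendsto_fixpt:
  assumes u: "u \<noteq> []" and z: "z \<in> I"
  shows "(\<lambda>m. (phiw phi u ^^ m) z) \<longlonglongrightarrow> fixpt I phi u"
proof -
  let ?f = "phiw phi u" and ?c = "fixpt I phi u"
  define s where "s m = (?f ^^ m) z" for m
  have cI: "?c \<in> I" and cf: "?f ?c = ?c" using fixpt_in_I phiw_fixpt u by auto
  have sS: "s (Suc m) = ?f (s m)" for m by (simp add: s_def)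
  show ?thesis
  proof (cases "z \<le> ?c")
    case True
    have bd: "z \<le> s m \<and> s m \<le> ?c" for m
    proof (induction m)
      case (Suc m)
      have smI: "s m \<in> I" using in_I_between[OF z cI] Suc by auto
      then show ?case using le_phiw_iff_le_fixpt[OF u smI] phiw_mono[OF smI cI, of u] Suc cf sS
        by auto
    qed (use True s_def in simp)
    have sI: "s m \<in> I" for m using bd in_I_between[OF z cI] by blast
    have "incseq s" using le_phiw_iff_le_fixpt[OF u] sI bd sS by (intro incseq_SucI) auto
    then obtain L where L: "s \<longlonglongrightarrow> L" "\<And>i. s i \<le> L"
      using incseq_convergent[of s ?c] bd by blast
    have "L \<in> I" using LIMSEQ_le_const2[OF L(1)] L(2)[of 0] bd in_I_between[OF z cI]
      by (meson order_trans)
    then show ?thesis using limit_of_iterates_is_fixpt[OF u] L sI unfolding s_def by metis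
  next
    case False
    have bd: "?c \<le> s m \<and> s m \<le> z" for m
    proof (induction m)
      case (Suc m)
      have smI: "s m \<in> I" using in_I_between[OF cI z] Suc by auto
      then show ?case using less_phiw_iff_less_fixpt[OF u smI] phiw_mono[OF cI smI, of u] Suc cf sS
        by (auto simp: not_less)
    qed (use False s_def in simp)
    have sI: "s m \<in> I" for m using bd in_I_between[OF cI z] by blast
    have "decseq s" using less_phiw_iff_less_fixpt[OF u] sI bd sS
      by (intro decseq_SucI) (metis linorder_not_less)
    then obtain L where L: "s \<longlonglongrightarrow> L" "\<And>i. L \<le> s i"
      using decseq_convergent[of s ?c] bd by blast
    have "L \<in> I" using LIMSEQ_le_const[OF L(1)] L(2)[of 0] bd in_I_between[OF cI z]
      by (meson order_trans)
    then show ?thesis using limit_of_iterates_is_fixpt[OF u] L sI unfolding s_def by metis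
  qed
qed

end

section \<open>Threshold itineraries and word combinatorics\<close>

definition itin_prefix :: "(bool \<Rightarrow> real \<Rightarrow> real) \<Rightarrow> real \<Rightarrow> real \<Rightarrow> word \<Rightarrow> bool" where
  "itin_prefix phi t s v \<longleftrightarrow> (\<forall>k<length v. (t \<le> phiw phi (take k v) s) = v ! k)"

lemma itin_prefix_Nil [simp]: "itin_prefix phi t s []"
  by (simp add: itin_prefix_def)

lemma itin_prefix_Cons:
  "itin_prefix phi t s (c # v) \<longleftrightarrow> (t \<le> s) = c \<and> itin_prefix phi t (phi c s) v"
  unfolding itin_prefix_def by (simp add: All_less_Suc2)

lemma itin_prefix_append:
  "itin_prefix phi t s (u @ v) \<longleftrightarrow> itin_prefix phi t s u \<and> itin_prefix phi t (phiw phi u s) v"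
  by (induction u arbitrary: s) (auto simp: itin_prefix_Cons)

lemma itin_prefix_appendD: "itin_prefix phi t s (u @ v) \<Longrightarrow> itin_prefix phi t s u"
  using itin_prefix_append by blast

lemma itin_prefix_replicate:
  "itin_prefix phi t s (replicate n c) \<longleftrightarrow> (\<forall>i<n. (t \<le> phiw phi (replicate i c) s) = c)"
  unfolding itin_prefix_def by (simp add: take_replicate)

lemma thr_orbit_eq_phiw_take:
  "k \<le> length v \<Longrightarrow> (\<forall>j<k. (x \<le> thr_orbit phi x j) = v ! j) \<Longrightarrow>
    thr_orbit phi x k = phiw phi (take k v) x"
  by (induction k) (auto simp: take_Suc_conv_app_nth)

text \<open>The threshold orbit of \<open>x\<close> is the orbit of \<open>x\<close> for the threshold \<open>x\<close>, started at \<open>x\<^sub>0 = x\<close>.\<close>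

lemma itin_prefix_self_iff:
  "itin_prefix phi x x v \<longleftrightarrow> (\<forall>k<length v. (x \<le> thr_orbit phi x k) = v ! k)"
proof
  assume v: "itin_prefix phi x x v"
  have "k < length v \<Longrightarrow> (x \<le> thr_orbit phi x k) = v ! k" for k
  proof (induction k rule: less_induct)
    case (less k)
    then have "thr_orbit phi x k = phiw phi (take k v) x"
      by (intro thr_orbit_eq_phiw_take) auto
    then show ?case using v less.prems unfolding itin_prefix_def by simp
  qed
  then show "\<forall>k<length v. (x \<le> thr_orbit phi x k) = v ! k" by blast
next
  assume "\<forall>k<length v. (x \<le> thr_orbit phi x k) = v ! k"
  then show "itin_prefix phi x x v"
    unfolding itin_prefix_def using thr_orbit_eq_phiw_take[of _ v x phi] by auto
qed

definition word_pow :: "word \<Rightarrow> nat \<Rightarrow> word" where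
  "word_pow u m = concat (replicate m u)"

lemma word_pow_0 [simp]: "word_pow u 0 = []"
  by (simp add: word_pow_def)

lemma word_pow_Suc: "word_pow u (Suc m) = u @ word_pow u m"
  by (simp add: word_pow_def)

lemma word_pow_Suc': "word_pow u (Suc m) = word_pow u m @ u"
  unfolding word_pow_def by (induction m) auto

lemma length_word_pow [simp]: "length (word_pow u m) = m * length u"
  by (induction m) (auto simp: word_pow_Suc)

lemma nth_word_pow: "k < m * length u \<Longrightarrow> word_pow u m ! k = u ! (k mod length u)"
proof (induction m arbitrary: k)
  case (Suc m)
  then show ?case
    by (cases "k < length u") (auto simp: word_pow_Suc nth_append mod_if)
qed simp

lemma phiw_word_pow: "phiw phi (word_pow u m) = phiw phi u ^^ m"
  by (induction m) (auto simp: word_pow_Suc')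

lemma word_pow_Suc_rotate: "word_pow (u @ v) (Suc m) = u @ word_pow (v @ u) m @ v"
  by (induction m) (auto simp: word_pow_Suc)

lemma length_filter_word_pow: "length (filter P (word_pow u m)) = m * length (filter P u)"
  by (induction m) (auto simp: word_pow_Suc)

definition word_morph :: "word \<Rightarrow> word \<Rightarrow> word \<Rightarrow> word" where
  "word_morph B0 B1 v = concat (map (\<lambda>b. if b then B1 else B0) v)"

lemma word_morph_Nil [simp]: "word_morph B0 B1 [] = []"
  and word_morph_Cons [simp]: "word_morph B0 B1 (c # v) = (if c then B1 else B0) @ word_morph B0 B1 v"
  and word_morph_append [simp]: "word_morph B0 B1 (u @ v) = word_morph B0 B1 u @ word_morph B0 B1 v"
  by (simp_all add: word_morph_def)

lemma word_morph_word_pow: "word_morph B0 B1 (word_pow u m) = word_pow (word_morph B0 B1 u) m"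
  by (induction m) (auto simp: word_pow_Suc)

lemma phiw_word_morph:
  "phiw (\<lambda>c. phiw phi (if c then B1 else B0)) v = phiw phi (word_morph B0 B1 v)"
  by (induction v) auto

lemma fixpt_word_morph:
  "fixpt I (\<lambda>c. phiw phi (if c then B1 else B0)) v = fixpt I phi (word_morph B0 B1 v)"
  unfolding fixpt_def phiw_word_morph ..

lemma word_morph_append_starts_False:
  assumes "\<exists>R0. B0 = False # R0" "\<exists>R1. B1 = False # R1"
  shows "\<exists>R. word_morph B0 B1 v @ False # S = False # R"
  using assms by (cases v) auto

lemma Lmor_eq_word_morph:
  "Lmor p = word_morph (replicate (Suc p) False @ [True]) (replicate p False @ [True])"
  unfolding Lmor_def word_morph_def by (simp only: Suc_eq_plus1)

lemma Rmor_eq_word_morph: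
  "Rmor p = word_morph (False # replicate p True) (False # replicate (Suc p) True)"
  unfolding Rmor_def word_morph_def by (simp only: Suc_eq_plus1)

section \<open>Periodic threshold itineraries\<close>

context a2_system
begin

abbreviation trap :: "real \<Rightarrow> real set" where
  "trap t \<equiv> {phi True t ..< phi False t}"

lemma trap_step:
  assumes t: "y1 \<le> t" "t \<le> y0" and s: "s \<in> trap t \<or> s = t"
  shows "phi (t \<le> s) s \<in> trap t"
proof (cases "s = t")
  case True
  then show ?thesis using phi1_less_phi0[OF t] by simp
next
  case False
  then have sJ: "s \<in> trap t" using s by auto
  have "y1 \<le> s \<and> s \<le> y0" using phi_in_box[OF t, of True] phi_in_box[OF t, of False] sJ by auto
  then have tI: "t \<in> I" and sI: "s \<in> I" using in_I_if_in_box t by auto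
  have p0b: "phi False t \<le> y0" and p1b: "y1 \<le> phi True t" using phi_in_box[OF t] by auto
  show ?thesis
  proof (cases "t \<le> s")
    case True
    have "phi True t \<le> phi True s" using phiw_mono[OF tI sI True, where u="[True]"] by simp
    moreover have "phi True s < phi True (phi False t)"
      using phiw_strict_mono[OF sI phi_in_I[OF tI], where u="[True]"] sJ by simp
    moreover have "phi True (phi False t) \<le> phi False t" using phi1_le[OF phi_in_I[OF tI]] p0b p1b
      using phi_in_box[OF t, of False] by auto
    ultimately show ?thesis using True by auto
  next
    case False
    have "phi False s < phi False t" using phiw_strict_mono[OF sI tI, where u="[False]"] False by simp
    moreover have "phi False (phi True t) \<le> phi False s"
      using phiw_mono[OF phi_in_I[OF tI] sI, where u="[False]"] sJ by simp
    moreover have "phi True t \<le> phi False (phi True t)"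
      using phi0_ge[OF phi_in_I[OF tI]] phi_in_box[OF t, of True] by auto
    ultimately show ?thesis using False by auto
  qed
qed

text \<open>
  The segment \<open>[x, y\<^sub>u]\<close> is mapped into itself by \<open>\<phi>\<^sub>u\<close>; within one period a letter \<open>1\<close> is
  forced by comparison with the orbit of \<open>x\<close>, a letter \<open>0\<close> by comparison with that of \<open>y\<^sub>u\<close>.
\<close>

lemma itin_prefix_word_pow_if:
  assumes u: "u \<noteq> []" and xI: "x \<in> I" and xa: "x \<le> fixpt I phi u"
    and ones: "\<forall>j<length u. u ! j \<longrightarrow> x \<le> phiw phi (take j u) x"
    and zeros: "\<forall>j<length u. \<not> u ! j \<longrightarrow> phiw phi (take j u) (fixpt I phi u) < x \<or>
                (phiw phi (take j u) (fixpt I phi u) \<le> x \<and> x < fixpt I phi u)"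
  shows "itin_prefix phi x x (word_pow u m)"
proof -
  let ?a = "fixpt I phi u"
  have aI: "?a \<in> I" and af: "phiw phi u ?a = ?a" using fixpt_in_I phiw_fixpt u by auto
  have block: "itin_prefix phi x z u" if z: "x \<le> z" "z \<le> ?a" "z < ?a \<or> x = ?a" for z
    unfolding itin_prefix_def
  proof (intro allI impI)
    fix j assume j: "j < length u"
    have zI: "z \<in> I" using in_I_between[OF xI aI] z by auto
    show "(x \<le> phiw phi (take j u) z) = u ! j"
    proof (cases "u ! j")
      case True
      then have "x \<le> phiw phi (take j u) x" using ones j by blast
      then show ?thesis using True phiw_mono[OF xI zI z(1), of "take j u"] by simp
    next
      case False
      have "phiw phi (take j u) z < x"
      proof (cases "phiw phi (take j u) ?a < x")
        case True
        then show ?thesis using phiw_mono[OF zI aI z(2), of "take j u"] by auto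
      next
        case False
        then have "phiw phi (take j u) ?a \<le> x" "x < ?a" using zeros j \<open>\<not> u ! j\<close> by auto
        then show ?thesis using z phiw_strict_mono[OF zI aI, of "take j u"] by auto
      qed
      then show ?thesis using False by auto
    qed
  qed
  have "itin_prefix phi x z (word_pow u m)" if "x \<le> z" "z \<le> ?a" "z < ?a \<or> x = ?a" for z
    using that
  proof (induction m arbitrary: z)
    case (Suc m)
    have zI: "z \<in> I" using in_I_between[OF xI aI] Suc.prems by auto
    have "x \<le> phiw phi u x" using le_phiw_iff_le_fixpt[OF u xI] xa by blast
    also have "\<dots> \<le> phiw phi u z" using phiw_mono[OF xI zI] Suc.prems by blast
    finally have "x \<le> phiw phi u z" .
    moreover have "phiw phi u z \<le> ?a" using phiw_mono[OF zI aI] af Suc.prems by metis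
    moreover have "phiw phi u z < ?a \<or> x = ?a"
      using phiw_strict_mono[OF zI aI] af Suc.prems by metis
    ultimately have "itin_prefix phi x (phiw phi u z) (word_pow u m)" by (rule Suc.IH)
    then show ?case using block[OF Suc.prems] by (simp add: word_pow_Suc itin_prefix_append)
  qed simp
  from this[of x] show ?thesis using xa by (simp add: order_le_less)
qed

lemma le_fixpt_if_itin_prefix_word_pow:
  assumes u: "u \<noteq> []" and xI: "x \<in> I" and itin: "\<forall>m. itin_prefix phi x x (word_pow u m)"
    and u0: "u ! 0"
  shows "x \<le> fixpt I phi u"
proof -
  have "itin_prefix phi x x (u @ u)" using itin[rule_format, of 2] by (simp add: numeral_2_eq_2 word_pow_Suc)
  then have "itin_prefix phi x (phiw phi u x) u" by (simp only: itin_prefix_append)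
  then have "x \<le> phiw phi u x" using u u0 unfolding itin_prefix_def by auto
  then show ?thesis using le_phiw_iff_le_fixpt[OF u xI] by simp
qed

text \<open>The orbit of \<open>x\<close> accumulates at \<open>y\<^sub>u\<close>, so a strict inequality along the orbit
  becomes a weak one at the fixed point.\<close>

lemma phiw_take_fixpt_le_if_itin_prefix_word_pow:
  assumes u: "u \<noteq> []" and xI: "x \<in> I" and itin: "\<forall>m. itin_prefix phi x x (word_pow u m)"
    and j: "j < length u" "\<not> u ! j"
  shows "phiw phi (take j u) (fixpt I phi u) \<le> x"
proof -
  let ?g = "phiw phi (take j u)"
  define s where "s m = (phiw phi u ^^ m) x" for m
  have sI: "s m \<in> I" for m unfolding s_def phiw_word_pow[symmetric] using phiw_in_I xI by blast
  have less: "?g (s m) < x" for m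
  proof -
    have "itin_prefix phi x x (word_pow u m @ u)" using itin word_pow_Suc' by metis
    then have "itin_prefix phi x (s m) u" unfolding s_def phiw_word_pow[symmetric] itin_prefix_append
      by blast
    then show ?thesis using j unfolding itin_prefix_def by auto
  qed
  have "s \<longlonglongrightarrow> fixpt I phi u" unfolding s_def using iterates_tendsto_fixpt[OF u xI] .
  from continuous_on_tendsto_compose[OF phiw_continuous_on[OF order_refl] this fixpt_in_I[OF u]]
  have "(\<lambda>m. ?g (s m)) \<longlonglongrightarrow> ?g (fixpt I phi u)" using sI by auto
  then show ?thesis using LIMSEQ_le_const2 less less_imp_le by blast
qed

end

definition periodic_window :: "word \<Rightarrow> real set \<Rightarrow> (bool \<Rightarrow> real \<Rightarrow> real) \<Rightarrow> bool" where
  "periodic_window w I phi \<longleftrightarrow> (\<forall>x\<in>I.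
     (\<forall>m. itin_prefix phi x x (word_pow (True # False # w) m)) \<longleftrightarrow>
     x \<in> {fixpt I phi (False # True # w) .. fixpt I phi (True # False # w)})"

context a2_system
begin

lemma periodic_window_zeros:
  assumes q: "1 \<le> q" and w: "w = replicate (q - 1) False"
  shows "periodic_window w I phi"
proof -
  let ?u = "True # False # w"
  let ?a = "fixpt I phi ?u" and ?b = "fixpt I phi (False # True # w)"
  let ?X = "True # w"
  have un: "?u \<noteq> []" by simp
  have uX: "?u = ?X @ [False]" using w by (simp add: replicate_append_same)
  have aI: "?a \<in> I" using fixpt_in_I un by blast
  have af: "phiw phi ?u ?a = ?a" using phiw_fixpt un by blast
  have b_eq: "?b = phiw phi ?X ?a" using fixpt_rotate[of ?X "[False]"] uX by simp
  have "phi False ?b = phiw phi (?X @ [False]) ?a" using b_eq by simp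
  then have ab: "phi False ?b = ?a" using af uX by simp
  have bI: "?b \<in> I" using fixpt_in_I by simp
  have "?b < y0" using fixpt_less_y0 by simp
  then have ba: "?b < ?a" using phi0_gt[OF bI] ab by simp
  have a1: "y1 \<le> phi True ?a" "phi True ?a \<le> y0"
    using phi_in_box fixpt_ge_y1[OF un] fixpt_le_y0[OF un] by blast+
  have wF: "False # w = replicate q False" using w q by (cases q) auto
  have uj: "j < length ?u \<Longrightarrow> 1 \<le> j \<Longrightarrow> take j ?u = True # replicate (j - 1) False \<and> \<not> ?u ! j" for j
    unfolding wF by (cases j) (auto simp: take_replicate min_def)
  have lenu: "length ?u = Suc q" using w q by simp
  show ?thesis unfolding periodic_window_def
  proof (intro ballI iffI)
    fix x assume xI: "x \<in> I" and H: "x \<in> {?b .. ?a}"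
    show "\<forall>m. itin_prefix phi x x (word_pow ?u m)"
    proof
      fix m show "itin_prefix phi x x (word_pow ?u m)"
      proof (rule itin_prefix_word_pow_if[OF un xI])
        show "x \<le> ?a" using H by auto
        show "\<forall>j<length ?u. ?u ! j \<longrightarrow> x \<le> phiw phi (take j ?u) x"
        proof (intro allI impI)
          fix j assume "j < length ?u" "?u ! j"
          then have "j = 0" using uj[of j] by (cases "j = 0") auto
          then show "x \<le> phiw phi (take j ?u) x" by simp
        qed
        show "\<forall>j<length ?u. \<not> ?u ! j \<longrightarrow> phiw phi (take j ?u) ?a < x \<or>
                (phiw phi (take j ?u) ?a \<le> x \<and> x < ?a)"
        proof (intro allI impI)
          fix j assume j: "j < length ?u" "\<not> ?u ! j"
          then have j1: "1 \<le> j" by (cases j) auto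
          have "phiw phi (take j ?u) ?a = phiw phi (replicate (j - 1) False) (phi True ?a)"
            using uj[OF j(1) j1] by simp
          also have "\<dots> \<le> phiw phi (replicate (q - 1) False) (phi True ?a)"
            using phiw_replicate0_mono[OF a1] j lenu by auto
          also have "\<dots> = ?b" using b_eq w by simp
          finally have "phiw phi (take j ?u) ?a \<le> ?b" .
          then show "phiw phi (take j ?u) ?a < x \<or> (phiw phi (take j ?u) ?a \<le> x \<and> x < ?a)"
            using H ba by force
        qed
      qed
    qed
  next
    fix x assume xI: "x \<in> I" and G: "\<forall>m. itin_prefix phi x x (word_pow ?u m)"
    have "x \<le> ?a" using le_fixpt_if_itin_prefix_word_pow[OF un xI G] by simp
    moreover have "phiw phi (take q ?u) ?a \<le> x"
      using phiw_take_fixpt_le_if_itin_prefix_word_pow[OF un xI G, of q] uj[of q] lenu q by simp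
    moreover have "phiw phi (take q ?u) ?a = ?b" using uj[of q] lenu q b_eq w by simp
    ultimately show "x \<in> {?b .. ?a}" by simp
  qed
qed

lemma periodic_window_ones:
  assumes q: "1 \<le> q" and w: "w = replicate (q - 1) True"
  shows "periodic_window w I phi"
proof -
  let ?u = "True # False # w"
  let ?a = "fixpt I phi ?u" and ?b = "fixpt I phi (False # True # w)"
  have un: "?u \<noteq> []" by simp
  have uY: "False # True # w = (False # w) @ [True]" using w by (simp add: replicate_append_same)
  have aI: "?a \<in> I" using fixpt_in_I un by blast
  have b_eq: "?b = phi True ?a" using fixpt_rotate[of "[True]" "False # w"] uY by simp
  have "y1 < ?a" using fixpt_greater_y1 by simp
  then have ba: "?b < ?a" using phi1_less[OF aI] b_eq by simp
  have lenu: "length ?u = Suc q" using w q by simp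
  show ?thesis unfolding periodic_window_def
  proof (intro ballI iffI)
    fix x assume xI: "x \<in> I" and H: "x \<in> {?b .. ?a}"
    have xb: "y1 \<le> x" "x \<le> y0" using H fixpt_ge_y1[OF un] fixpt_le_y0[OF un] fixpt_ge_y1[of "False # True # w"] by auto
    have pb: "y1 \<le> phi False (phi True x)" "phi False (phi True x) \<le> y0"
      using phi_in_box[OF phi_in_box[OF xb, of True, THEN conjunct1] phi_in_box[OF xb, of True, THEN conjunct2], of False] by auto
    have xa: "x \<le> phiw phi ?u x" using le_phiw_iff_le_fixpt[OF un xI] H by simp
    show "\<forall>m. itin_prefix phi x x (word_pow ?u m)"
    proof
      fix m show "itin_prefix phi x x (word_pow ?u m)"
      proof (rule itin_prefix_word_pow_if[OF un xI])
        show "x \<le> ?a" using H by auto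
        show "\<forall>j<length ?u. ?u ! j \<longrightarrow> x \<le> phiw phi (take j ?u) x"
        proof (intro allI impI)
          fix j assume j: "j < length ?u" "?u ! j"
          show "x \<le> phiw phi (take j ?u) x"
          proof (cases j)
            case 0 then show ?thesis by simp
          next
            case (Suc i)
            then obtain k where k: "j = Suc (Suc k)" using j by (cases i) auto
            then have "take j ?u = True # False # replicate k True" using w j by (simp add: take_replicate min_def)
            then have "phiw phi (take j ?u) x = phiw phi (replicate k True) (phi False (phi True x))" by simp
            moreover have "phiw phi (replicate (q - 1) True) (phi False (phi True x)) \<le>
                           phiw phi (replicate k True) (phi False (phi True x))"
              using phiw_replicate1_antimono[OF pb] k j lenu by auto
            moreover have "phiw phi ?u x = phiw phi (replicate (q - 1) True) (phi False (phi True x))" using w by simp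
            ultimately show ?thesis using xa by simp
          qed
        qed
        show "\<forall>j<length ?u. \<not> ?u ! j \<longrightarrow> phiw phi (take j ?u) ?a < x \<or>
                (phiw phi (take j ?u) ?a \<le> x \<and> x < ?a)"
        proof (intro allI impI)
          fix j assume j: "j < length ?u" "\<not> ?u ! j"
          then have "j = 1" using w by (cases j; cases "j - 1") auto
          then have "phiw phi (take j ?u) ?a = ?b" using b_eq by simp
          then show "phiw phi (take j ?u) ?a < x \<or> (phiw phi (take j ?u) ?a \<le> x \<and> x < ?a)"
            using H ba by force
        qed
      qed
    qed
  next
    fix x assume xI: "x \<in> I" and G: "\<forall>m. itin_prefix phi x x (word_pow ?u m)"
    have "x \<le> ?a" using le_fixpt_if_itin_prefix_word_pow[OF un xI G] by simp
    moreover have "phiw phi (take 1 ?u) ?a \<le> x" using phiw_take_fixpt_le_if_itin_prefix_word_pow[OF un xI G, of 1] by simp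
    ultimately show "x \<in> {?b .. ?a}" using b_eq by simp
  qed
qed

end

section \<open>Renormalisation\<close>

context a2_system
begin

lemma renormalised_A2:
  assumes B0: "B0 \<noteq> []" and B1: "B1 \<noteq> []" and lt: "fixpt I phi B1 < fixpt I phi B0"
  shows "A2 I (\<lambda>c. phiw phi (if c then B1 else B0)) (fixpt I phi B0) (fixpt I phi B1)"
  unfolding A2_def using assms interval_I fixpt_in_I phiw_fixpt
  by (auto simp: phiw_in_I phiw_strict_mono phiw_contracts image_subset_iff)

end

text \<open>
  The blocks \<open>B\<^sub>0\<close>, \<open>B\<^sub>1\<close> of a morphism share the prefix \<open>T\<close>, after which they continue
  with \<open>0\<close> and \<open>1\<close> respectively; \<open>\<psi>\<^sub>c = \<phi>\<^bsub>B\<^sub>c\<^esub>\<close> is the renormalised pair, and the last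
  assumption says that one threshold step of \<open>\<psi>\<close> with threshold \<open>x'\<close> is realised by the
  corresponding block of \<open>\<phi>\<close>-steps with threshold \<open>\<phi>\<^sub>T x'\<close>.
\<close>

locale renormalisation = a2_system +
  fixes T B0 B1 :: word
  assumes B1_eq: "B1 = T @ [True]"
    and T_ne: "T \<noteq> []" and hd_T: "hd T = False"
    and B0_eq: "\<exists>R. B0 @ [False] = T @ False # R"
    and fixpt_B1_less_B0: "fixpt I phi B1 < fixpt I phi B0"
    and itin_prefix_block: "\<And>x' Q. fixpt I phi B1 \<le> x' \<Longrightarrow> x' \<le> fixpt I phi B0 \<Longrightarrow>
      phiw phi B1 x' \<le> Q \<Longrightarrow> Q < phiw phi B0 x' \<Longrightarrow>
      itin_prefix phi (phiw phi T x') Q (if x' \<le> Q then B1 else B0)"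
begin

abbreviation psi :: "bool \<Rightarrow> real \<Rightarrow> real" where
  "psi \<equiv> \<lambda>c. phiw phi (if c then B1 else B0)"

lemma B0_ne: "B0 \<noteq> []" and B1_ne: "B1 \<noteq> []"
  using B0_eq T_ne B1_eq by (auto simp: Cons_eq_append_conv)

lemma block_False_prefix: "\<exists>R. (if c then B1 else B0) @ [False] = T @ c # R"
  using B0_eq B1_eq by auto

lemma block_starts_False: "\<exists>R. (if c then B1 else B0) = False # R"
proof -
  obtain R where "(if c then B1 else B0) @ [False] = T @ c # R" using block_False_prefix by blast
  then show ?thesis using T_ne hd_T B0_ne B1_ne
    by (cases T; cases "if c then B1 else B0") auto
qed

lemma word_morph_snoc_False: "\<exists>R. word_morph B0 B1 v @ [False] = False # R"
  using word_morph_append_starts_False block_starts_False[of False] block_starts_False[of True]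
  by simp

end

sublocale renormalisation \<subseteq> R: a2_system I "\<lambda>c. phiw phi (if c then B1 else B0)" "fixpt I phi B0" "fixpt I phi B1"
  using renormalised_A2 B0_ne B1_ne fixpt_B1_less_B0 by unfold_locales

context renormalisation
begin

lemma itin_prefix_word_morph:
  assumes x': "fixpt I phi B1 \<le> x'" "x' \<le> fixpt I phi B0"
  shows "itin_prefix psi x' Q v \<Longrightarrow> Q \<in> R.trap x' \<Longrightarrow>
    itin_prefix phi (phiw phi T x') Q (word_morph B0 B1 v)"
proof (induction v arbitrary: Q)
  case (Cons c v)
  have c: "(x' \<le> Q) = c" and v: "itin_prefix psi x' (psi c Q) v"
    using Cons.prems(1) itin_prefix_Cons by auto
  have "itin_prefix phi (phiw phi T x') Q (if x' \<le> Q then B1 else B0)"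
    using itin_prefix_block[OF x'] Cons.prems(2) by simp
  then have "itin_prefix phi (phiw phi T x') Q (if c then B1 else B0)" using c by simp
  moreover have "psi c Q \<in> R.trap x'" using R.trap_step[OF x'] Cons.prems(2) c by blast
  ultimately show ?case using Cons.IH v by (simp add: itin_prefix_append)
qed simp

lemma itin_prefix_of_word_morph:
  assumes x'I: "x' \<in> I"
  shows "Q \<in> I \<Longrightarrow> itin_prefix phi (phiw phi T x') Q (word_morph B0 B1 v @ [False]) \<Longrightarrow>
    itin_prefix psi x' Q v"
proof (induction v arbitrary: Q)
  case (Cons c v)
  let ?B = "if c then B1 else B0"
  obtain R where R: "word_morph B0 B1 v @ [False] = False # R" using word_morph_snoc_False by blast
  obtain R' where R': "?B @ [False] = T @ c # R'" using block_False_prefix by blast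
  have v: "itin_prefix phi (phiw phi T x') Q (?B @ word_morph B0 B1 v @ [False])"
    using Cons.prems(2) by simp
  moreover have "?B @ word_morph B0 B1 v @ [False] = (?B @ [False]) @ R" using R by simp
  ultimately have "itin_prefix phi (phiw phi T x') Q (T @ c # R' @ R)" using R' by simp
  then have "(phiw phi T x' \<le> phiw phi T Q) = c"
    unfolding itin_prefix_append itin_prefix_Cons by simp
  then have c: "(x' \<le> Q) = c" using phiw_le_iff[OF x'I Cons.prems(1)] by simp
  have "itin_prefix phi (phiw phi T x') (psi c Q) (word_morph B0 B1 v @ [False])"
    using v unfolding itin_prefix_append by simp
  moreover have "psi c Q \<in> I" using phiw_in_I Cons.prems(1) by blast
  ultimately have "itin_prefix psi x' (psi c Q) v" using Cons.IH by blast
  then show ?case using c itin_prefix_Cons by blast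
qed simp

end

text \<open>
  \<open>u = 10w\<close> is a rotation of the image of \<open>u' = 10w'\<close> under the morphism, and
  \<open>01w\<close> is the corresponding rotation of the image of \<open>01w'\<close>.
\<close>

locale renormalised_word = renormalisation +
  fixes w w' X Y :: word
  assumes morph_10: "word_morph B0 B1 (True # False # w') = T @ X" "True # False # w = X @ T"
    and morph_01: "word_morph B0 B1 (False # True # w') = T @ Y" "False # True # w = Y @ T"
    and u_prefix: "\<exists>R. True # False # w = True # T @ False # R"
begin

lemma fixpt_10_eq: "fixpt I phi (True # False # w) = phiw phi T (fixpt I psi (True # False # w'))"
  and fixpt_01_eq: "fixpt I phi (False # True # w) = phiw phi T (fixpt I psi (False # True # w'))"
  using fixpt_rotate[of T X] fixpt_rotate[of T Y] morph_10 morph_01 T_ne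
  by (simp_all add: fixpt_word_morph)

lemma word_pow_eq_word_morph:
  "word_pow (True # False # w) m @ X = True # word_morph B0 B1 (False # w' @ word_pow (True # False # w') m)"
proof -
  have "T @ True # word_morph B0 B1 (False # w' @ word_pow (True # False # w') m)
      = word_morph B0 B1 (word_pow (True # False # w') (Suc m))"
    using B1_eq by (simp add: word_pow_Suc)
  also have "\<dots> = T @ word_pow (True # False # w) m @ X"
    using word_pow_Suc_rotate word_morph_word_pow morph_10 by metis
  finally show ?thesis by simp
qed

lemma itin_prefix_word_pow_if_renormalised:
  assumes x'I: "x' \<in> I" and x': "fixpt I phi B1 \<le> x'" "x' \<le> fixpt I phi B0"
    and itin: "\<forall>m. itin_prefix psi x' x' (word_pow (True # False # w') m)"
  shows "itin_prefix phi (phiw phi T x') (phiw phi T x') (word_pow (True # False # w) m)"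
proof -
  have "itin_prefix psi x' x' (True # False # w' @ word_pow (True # False # w') m)"
    using itin[rule_format, of "Suc m"] by (simp add: word_pow_Suc)
  then have "itin_prefix psi x' (psi True x') (False # w' @ word_pow (True # False # w') m)"
    using itin_prefix_Cons by auto
  moreover have "psi True x' \<in> R.trap x'" using R.trap_step[OF x', of x'] by simp
  ultimately have "itin_prefix phi (phiw phi T x') (psi True x')
      (word_morph B0 B1 (False # w' @ word_pow (True # False # w') m))"
    by (rule itin_prefix_word_morph[OF x'])
  moreover have "psi True x' = phi True (phiw phi T x')" using B1_eq by simp
  ultimately have "itin_prefix phi (phiw phi T x') (phiw phi T x')
      (True # word_morph B0 B1 (False # w' @ word_pow (True # False # w') m))"
    by (simp add: itin_prefix_Cons)
  then have "itin_prefix phi (phiw phi T x') (phiw phi T x') (word_pow (True # False # w) m @ X)"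
    by (simp only: word_pow_eq_word_morph)
  then show ?thesis using itin_prefix_appendD by blast
qed

lemma renormalised_itin_prefix_word_pow:
  assumes x'I: "x' \<in> I"
    and itin: "\<forall>m. itin_prefix phi (phiw phi T x') (phiw phi T x') (word_pow (True # False # w) m)"
  shows "itin_prefix psi x' x' (word_pow (True # False # w') m)"
proof (cases m)
  case (Suc k)
  let ?x = "phiw phi T x'" and ?r = "False # w' @ word_pow (True # False # w') k"
  have "word_pow (True # False # w) (Suc k) = (word_pow (True # False # w) k @ X) @ T"
    using morph_10(2) by (simp add: word_pow_Suc')
  also have "\<dots> = (True # word_morph B0 B1 ?r @ [False]) @ tl T"
    using word_pow_eq_word_morph T_ne hd_T by (cases T) auto
  finally have "itin_prefix phi ?x ?x ((True # word_morph B0 B1 ?r @ [False]) @ tl T)"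
    using itin by metis
  then have "itin_prefix phi ?x ?x (True # word_morph B0 B1 ?r @ [False])"
    by (rule itin_prefix_appendD)
  moreover have "psi True x' = phi True ?x" using B1_eq by simp
  ultimately have "itin_prefix phi ?x (psi True x') (word_morph B0 B1 ?r @ [False])"
    by (simp add: itin_prefix_Cons)
  then have "itin_prefix psi x' (psi True x') ?r"
    using itin_prefix_of_word_morph[OF x'I] phiw_in_I[OF x'I] by blast
  then show ?thesis using Suc by (simp add: word_pow_Suc itin_prefix_Cons)
qed simp

lemma periodic_window_if_renormalised:
  assumes window: "periodic_window w' I psi"
  shows "periodic_window w I phi"
  unfolding periodic_window_def
proof (intro ballI iffI)
  let ?u = "True # False # w" and ?u' = "True # False # w'"
  let ?a' = "fixpt I psi ?u'" and ?b' = "fixpt I psi (False # True # w')"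
  have a'I: "?a' \<in> I" and b'I: "?b' \<in> I" using R.fixpt_in_I by auto
  fix x assume xI: "x \<in> I"
  {
    assume "x \<in> {fixpt I phi (False # True # w) .. fixpt I phi ?u}"
    then have x: "phiw phi T ?b' \<le> x" "x \<le> phiw phi T ?a'" using fixpt_10_eq fixpt_01_eq by auto
    then have "?b' \<le> ?a'" using phiw_le_iff[OF b'I a'I, of T] by linarith
    moreover have "continuous_on {?b'..?a'} (phiw phi T)"
      using in_I_between[OF b'I a'I] by (intro phiw_continuous_on) auto
    ultimately obtain x' where x': "?b' \<le> x'" "x' \<le> ?a'" "phiw phi T x' = x"
      using IVT'[of "phiw phi T" ?b' x ?a'] x by auto
    have x'I: "x' \<in> I" using in_I_between[OF b'I a'I] x' by auto
    have "fixpt I phi B1 \<le> x'" "x' \<le> fixpt I phi B0"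
      using x' R.fixpt_ge_y1[of "False # True # w'"] R.fixpt_le_y0[of ?u'] by auto
    moreover have "\<forall>m. itin_prefix psi x' x' (word_pow ?u' m)"
      using window x'I x' unfolding periodic_window_def by auto
    ultimately show "\<forall>m. itin_prefix phi x x (word_pow ?u m)"
      using itin_prefix_word_pow_if_renormalised[OF x'I] x'(3) by blast
  next
    assume itin: "\<forall>m. itin_prefix phi x x (word_pow ?u m)"
    obtain R where R: "?u = True # T @ False # R" using u_prefix by blast
    have "itin_prefix phi x x ?u" using itin[rule_format, of 1] by (simp add: word_pow_Suc)
    then have "itin_prefix phi x (phi True x) (T @ False # R)" using R by (simp add: itin_prefix_Cons)
    then have "\<not> x \<le> phi True x" and lt: "phiw phi T (phi True x) < x"
      using T_ne hd_T by (auto simp: itin_prefix_append itin_prefix_Cons neq_Nil_conv)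
    then have "y1 \<le> x" using phi1_ge[OF xI] by force
    then have "y1 \<le> phi True x" using phiw_mono[OF y1_in_I xI, where u="[True]"] phi1_y1 by simp
    then have "phiw phi T y1 \<le> phiw phi T (phi True x)" using phiw_mono y1_in_I phi_in_I xI by blast
    then have "phiw phi T y1 \<le> x" using lt by linarith
    moreover have "x \<le> phiw phi T ?a'"
      using le_fixpt_if_itin_prefix_word_pow[OF _ xI itin] fixpt_10_eq by simp
    moreover have "y1 \<le> ?a'" using R.fixpt_ge_y1[of ?u'] fixpt_ge_y1[OF B1_ne] by simp
    moreover have "continuous_on {y1..?a'} (phiw phi T)"
      using in_I_between[OF y1_in_I a'I] by (intro phiw_continuous_on) auto
    ultimately obtain x' where x': "y1 \<le> x'" "x' \<le> ?a'" "phiw phi T x' = x"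
      using IVT'[of "phiw phi T" y1 x ?a'] by auto
    have x'I: "x' \<in> I" using in_I_between[OF y1_in_I a'I] x' by auto
    have "\<forall>m. itin_prefix psi x' x' (word_pow ?u' m)"
      using renormalised_itin_prefix_word_pow[OF x'I] itin x'(3) by blast
    then have "?b' \<le> x'" "x' \<le> ?a'" using window x'I unfolding periodic_window_def by auto
    then show "x \<in> {fixpt I phi (False # True # w) .. fixpt I phi ?u}"
      using phiw_mono[OF b'I x'I] phiw_mono[OF x'I a'I] fixpt_10_eq fixpt_01_eq x'(3) by auto
  }
qed

end

section \<open>The blocks of \<open>L\<^sub>p\<close> and \<open>R\<^sub>p\<close>\<close>

context a2_system
begin

lemma phiw_replicate_commute: "phiw phi (replicate p c) (phi c z) = phi c (phiw phi (replicate p c) z)"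
proof -
  have "phiw phi (replicate p c) (phi c z) = phiw phi (replicate p c @ [c]) z"
    by (simp only: replicate_append_same replicate_Suc phiw.simps comp_apply)
  then show ?thesis by simp
qed

lemma fixpt_Lmor_blocks_less:
  "fixpt I phi (replicate p False @ [True]) < fixpt I phi (replicate (Suc p) False @ [True])"
proof -
  let ?B1 = "replicate p False @ [True]" and ?B0 = "replicate (Suc p) False @ [True]"
  let ?c = "fixpt I phi ?B1"
  have cI: "?c \<in> I" using fixpt_in_I by simp
  have "?c < y0" using fixpt_less_y0 by simp
  then have "?c < phi False ?c" using phi0_gt cI by blast
  then have "phiw phi ?B1 ?c < phiw phi ?B1 (phi False ?c)" using phiw_strict_mono cI phi_in_I by blast
  then have "?c < phiw phi ?B0 ?c" using phiw_fixpt[of ?B1] by simp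
  then show ?thesis using less_phiw_iff_less_fixpt[of ?B0 ?c] cI by simp
qed

lemma fixpt_Rmor_blocks_less:
  "fixpt I phi (False # replicate (Suc p) True) < fixpt I phi (False # replicate p True)"
proof -
  let ?B0 = "False # replicate p True" and ?B1 = "False # replicate (Suc p) True"
  let ?c = "fixpt I phi ?B0"
  have cI: "?c \<in> I" using fixpt_in_I by simp
  have "y1 < ?c" using fixpt_greater_y1 by simp
  then have "phi True ?c < ?c" using phi1_less cI by blast
  moreover have "?B1 = ?B0 @ [True]" by (simp add: replicate_append_same)
  ultimately have "phiw phi ?B1 ?c < ?c" using phiw_fixpt[of ?B0] by simp
  then have "\<not> ?c \<le> fixpt I phi ?B1" using le_phiw_iff_le_fixpt[of ?B1 ?c] cI by simp
  then show ?thesis by simp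
qed

lemma block_window_in_box:
  assumes "B0 \<noteq> []" "B1 \<noteq> []" "fixpt I phi B1 \<le> x'" "x' \<le> fixpt I phi B0"
    and "phiw phi B1 x' \<le> Q" "Q < phiw phi B0 x'"
  shows "y1 \<le> x' \<and> x' \<le> y0 \<and> y1 \<le> Q \<and> Q \<le> y0"
proof -
  have "y1 \<le> x'" "x' \<le> y0" using assms fixpt_ge_y1 fixpt_le_y0 by (meson order_trans)+
  then show ?thesis using assms(5,6) phiw_in_box[of x' B1] phiw_in_box[of x' B0] by auto
qed

lemma itin_prefix_Lmor_block_1:
  assumes p: "1 \<le> p" and x': "y1 \<le> x'" "x' \<le> y0" and Q: "y1 \<le> Q" "Q \<le> y0"
    and x1: "fixpt I phi (replicate p False @ [True]) \<le> x'"
    and x'_le_Q: "x' \<le> Q" and Q2: "Q < phiw phi (replicate (Suc p) False @ [True]) x'"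
  shows "itin_prefix phi (phiw phi (replicate p False) x') Q (replicate p False @ [True])"
proof -
  let ?x = "phiw phi (replicate p False) x'" and ?F = "\<lambda>i. replicate i False"
  let ?B1 = "replicate p False @ [True]" and ?Z = "False # True # ?F (p - 1)"
  have x'I: "x' \<in> I" and QI: "Q \<in> I" using in_I_if_in_box x' Q by auto
  have xI: "?x \<in> I" using phiw_in_I[OF x'I] .
  have F_p: "?F p = False # ?F (p - 1)" using p by (cases p) auto
  have B0_rot: "(replicate (Suc p) False @ [True]) @ ?F (p - 1) = ?F p @ ?Z"
    using F_p by (metis append_Cons append_Nil append_assoc replicate_Suc replicate_append_same)
  have Z_rot: "?F (p - 1) @ [False, True] = ?B1"
    using F_p by (metis append_Cons append_Nil append_assoc replicate_append_same)
  \<comment> \<open>the zeros are forced by the fixed point of the rotation \<open>010\<^sup>p\<^sup>-\<^sup>1\<close> of \<open>B\<^sub>1\<close>\<close>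
  have "fixpt I phi ?B1 \<le> phi False x'" using x1 phi0_ge[OF x'I x'(2)] by auto
  then have "phiw phi (?F (p - 1)) (fixpt I phi ?B1) \<le> ?x"
    using phiw_mono[OF fixpt_in_I phi_in_I[OF x'I]] F_p by simp
  then have "fixpt I phi ?Z \<le> ?x"
    using fixpt_rotate[of "?F (p - 1)" "[False, True]", unfolded Z_rot] by simp
  then have "phiw phi ?Z ?x \<le> ?x" using phiw_le_if_fixpt_le xI by blast
  moreover have "phiw phi (?F (p - 1)) Q < phiw phi (?F (p - 1)) (phiw phi (replicate (Suc p) False @ [True]) x')"
    using phiw_strict_mono[OF QI phiw_in_I[OF x'I] Q2] .
  then have "phiw phi (?F (p - 1)) Q < phiw phi ?Z ?x" using B0_rot by (metis comp_apply phiw_append)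
  ultimately have "(?x \<le> phiw phi (?F i) Q) = False" if "i < p" for i
    using phiw_replicate0_mono[OF Q, of i "p - 1"] that by fastforce
  moreover have "?x \<le> phiw phi (?F p) Q" using phiw_mono[OF x'I QI x'_le_Q] .
  ultimately show ?thesis
    unfolding itin_prefix_append itin_prefix_replicate by (auto simp: itin_prefix_Cons)
qed

lemma itin_prefix_Lmor_block_0:
  assumes x': "y1 \<le> x'" "x' \<le> y0" and Q: "y1 \<le> Q" "Q \<le> y0"
    and x2: "x' \<le> fixpt I phi (replicate (Suc p) False @ [True])"
    and Q_less_x': "Q < x'" and Q1: "phiw phi (replicate p False @ [True]) x' \<le> Q"
  shows "itin_prefix phi (phiw phi (replicate p False) x') Q (replicate (Suc p) False @ [True])"
proof -
  let ?x = "phiw phi (replicate p False) x'" and ?F = "\<lambda>i. replicate i False"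
  let ?B0 = "replicate (Suc p) False @ [True]" and ?Z = "True # ?F (Suc p)"
  have x'I: "x' \<in> I" and QI: "Q \<in> I" and xI: "?x \<in> I" and B0I: "fixpt I phi ?B0 \<in> I"
    using in_I_if_in_box x' Q phiw_in_I fixpt_in_I by auto
  have zeros: "(?x \<le> phiw phi (?F i) Q) = False" if "i < Suc p" for i
    using phiw_replicate0_mono[OF Q, of i p] phiw_strict_mono[OF QI x'I Q_less_x', of "?F p"] that
    by fastforce
  have "x' \<le> phi False (fixpt I phi ?B0)" using x2 phi0_ge[OF B0I fixpt_le_y0] by auto
  then have "?x \<le> phiw phi (?F p) (phi False (fixpt I phi ?B0))"
    using phiw_mono[OF x'I phi_in_I[OF B0I]] by blast
  also have "\<dots> = fixpt I phi ?Z"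
    using fixpt_rotate[of "?F (Suc p)" "[True]"] by (simp add: phiw_replicate_commute)
  finally have "?x \<le> fixpt I phi ?Z" .
  then have "?x \<le> phiw phi ?Z ?x" using le_phiw_iff_le_fixpt[of ?Z ?x] xI by blast
  also have "phiw phi ?Z ?x = phiw phi (?F (Suc p)) (phiw phi (?F p @ [True]) x')" by simp
  also have "\<dots> \<le> phiw phi (?F (Suc p)) Q" using phiw_mono[OF phiw_in_I[OF x'I] QI Q1] .
  finally show ?thesis using zeros
    unfolding itin_prefix_append itin_prefix_replicate by (auto simp: itin_prefix_Cons)
qed

lemma itin_prefix_Lmor_block:
  assumes "1 \<le> p"
    and "fixpt I phi (replicate p False @ [True]) \<le> x'" "x' \<le> fixpt I phi (replicate (Suc p) False @ [True])"
    and "phiw phi (replicate p False @ [True]) x' \<le> Q" "Q < phiw phi (replicate (Suc p) False @ [True]) x'"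
  shows "itin_prefix phi (phiw phi (replicate p False) x') Q
    (if x' \<le> Q then replicate p False @ [True] else replicate (Suc p) False @ [True])"
  using block_window_in_box[of "replicate (Suc p) False @ [True]" "replicate p False @ [True]" x' Q]
    itin_prefix_Lmor_block_1 itin_prefix_Lmor_block_0 assms
  by auto

lemma itin_prefix_Rmor_block_1:
  assumes Q: "y1 \<le> Q" "Q \<le> y0" and x'I: "x' \<in> I"
    and x'_le_Q: "x' \<le> Q" and Q2: "Q < phiw phi (False # replicate p True) x'"
  shows "itin_prefix phi (phiw phi (False # replicate p True) x') Q (False # replicate (Suc p) True)"
proof -
  let ?x = "phiw phi (False # replicate p True) x'" and ?T = "\<lambda>i. replicate i True"
  have QI: "Q \<in> I" using in_I_if_in_box Q by auto
  have Q': "y1 \<le> phi False Q" "phi False Q \<le> y0" using phi_in_box[OF Q] by auto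
  have "?x \<le> phiw phi (?T p) (phi False Q)" using phiw_mono[OF x'I QI x'_le_Q, of "False # ?T p"] by simp
  then have "?x \<le> phiw phi (?T i) (phi False Q)" if "i < Suc p" for i
    using phiw_replicate1_antimono[OF Q', of i p] that by fastforce
  then show ?thesis using Q2 unfolding itin_prefix_Cons itin_prefix_replicate by auto
qed

lemma itin_prefix_Rmor_block_0:
  assumes p: "1 \<le> p" and x'I: "x' \<in> I" and Q: "y1 \<le> Q" "Q \<le> y0"
    and x2: "x' \<le> fixpt I phi (False # replicate p True)"
    and Q1: "phiw phi (False # replicate (Suc p) True) x' \<le> Q" and Q2: "Q < phiw phi (False # replicate p True) x'"
  shows "itin_prefix phi (phiw phi (False # replicate p True) x') Q (False # replicate p True)"
proof -
  let ?T = "\<lambda>i. replicate i True"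
  let ?B0 = "False # ?T p" and ?X = "False # ?T (p - 1)"
  let ?x = "phiw phi ?B0 x'" and ?Z = "True # ?X" and ?d = "phiw phi ?X (fixpt I phi ?B0)"
  have QI: "Q \<in> I" and B0I: "fixpt I phi ?B0 \<in> I" using in_I_if_in_box Q fixpt_in_I by auto
  have xI: "?x \<in> I" using phiw_in_I[OF x'I] .
  have X_snoc: "?X @ [True] = ?B0" using p by (cases p) (auto simp: replicate_append_same)
  \<comment> \<open>the ones are forced by the fixed point of the rotation \<open>101\<^sup>p\<^sup>-\<^sup>1\<close> of \<open>B\<^sub>0\<close>\<close>
  have "phi True ?d = fixpt I phi ?B0" using phiw_fixpt[of ?B0] X_snoc[symmetric] by simp
  moreover have "y1 \<le> ?d" using phiw_in_box fixpt_ge_y1 fixpt_le_y0 by blast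
  ultimately have "fixpt I phi ?B0 \<le> ?d" using phi1_le phiw_in_I[OF B0I] by metis
  moreover have "?x \<le> fixpt I phi ?B0" using phiw_mono[OF x'I B0I x2, of ?B0] phiw_fixpt[of ?B0] by simp
  ultimately have "?x \<le> fixpt I phi ?Z" using fixpt_rotate[of ?X "[True]"] X_snoc by simp
  then have "?x \<le> phiw phi ?Z ?x" using le_phiw_iff_le_fixpt[of ?Z ?x] xI by simp
  also have "phiw phi ?Z ?x = phiw phi ?X (phiw phi (False # replicate (Suc p) True) x')"
    using X_snoc by (simp add: replicate_append_same[symmetric])
  also have "\<dots> \<le> phiw phi ?X Q" using phiw_mono[OF phiw_in_I[OF x'I] QI Q1] .
  finally have "?x \<le> phiw phi (?T (p - 1)) (phi False Q)" by simp
  moreover have Q': "y1 \<le> phi False Q" "phi False Q \<le> y0" using phi_in_box[OF Q] by auto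
  ultimately have "?x \<le> phiw phi (?T i) (phi False Q)" if "i < p" for i
    using phiw_replicate1_antimono[OF Q', of i "p - 1"] that by fastforce
  then show ?thesis using Q2 unfolding itin_prefix_Cons itin_prefix_replicate by auto
qed

lemma itin_prefix_Rmor_block:
  assumes "1 \<le> p"
    and "fixpt I phi (False # replicate (Suc p) True) \<le> x'" "x' \<le> fixpt I phi (False # replicate p True)"
    and "phiw phi (False # replicate (Suc p) True) x' \<le> Q" "Q < phiw phi (False # replicate p True) x'"
  shows "itin_prefix phi (phiw phi (False # replicate p True) x') Q
    (if x' \<le> Q then False # replicate (Suc p) True else False # replicate p True)"
  using block_window_in_box[of "False # replicate p True" "False # replicate (Suc p) True" x' Q]
    itin_prefix_Rmor_block_1 itin_prefix_Rmor_block_0 in_I_if_in_box assms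
  by auto

end

context a2_system
begin

lemma periodic_window_Lmor:
  assumes p: "1 \<le> p" and window: "\<And>J psi z0 z1. A2 J psi z0 z1 \<Longrightarrow> periodic_window w' J psi"
  shows "periodic_window (replicate p False @ [True] @ Lmor p w' @ replicate p False) I phi"
proof -
  let ?T = "replicate p False"
  let ?B0 = "replicate (Suc p) False @ [True]" and ?B1 = "replicate p False @ [True]"
  let ?M = "Lmor p w'"
  interpret renormalised_word I phi y0 y1 ?T ?B0 ?B1 "?T @ [True] @ ?M @ ?T" w'
    "True # replicate (Suc p) False @ [True] @ ?M" "False # True # replicate p False @ [True] @ ?M"
  proof unfold_locales
    show "?T \<noteq> []" "hd ?T = False" using p by (cases p; simp)+
    show "\<exists>R. ?B0 @ [False] = ?T @ False # R" by (simp add: replicate_append_same[symmetric])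
    show "fixpt I phi ?B1 < fixpt I phi ?B0" by (rule fixpt_Lmor_blocks_less)
    show "itin_prefix phi (phiw phi ?T x') Q (if x' \<le> Q then ?B1 else ?B0)"
      if "fixpt I phi ?B1 \<le> x'" "x' \<le> fixpt I phi ?B0" "phiw phi ?B1 x' \<le> Q" "Q < phiw phi ?B0 x'"
      for x' Q
      using itin_prefix_Lmor_block[OF p that] .
    show "\<exists>R. True # False # ?T @ [True] @ ?M @ ?T = True # ?T @ False # R"
      by (simp add: replicate_app_Cons_same)
  qed (simp_all add: Lmor_eq_word_morph replicate_append_same)
  show ?thesis using periodic_window_if_renormalised window R.A2 by blast
qed


lemma periodic_window_Rmor:
  assumes p: "1 \<le> p" and window: "\<And>J psi z0 z1. A2 J psi z0 z1 \<Longrightarrow> periodic_window w' J psi"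
  shows "periodic_window (replicate p True @ Rmor p w' @ False # replicate p True) I phi"
proof -
  let ?B0 = "False # replicate p True" and ?B1 = "False # replicate (Suc p) True"
  let ?M = "Rmor p w'"
  interpret renormalised_word I phi y0 y1 ?B0 ?B0 ?B1 "replicate p True @ ?M @ False # replicate p True" w'
    "True # False # replicate p True @ ?M" "False # True # replicate p True @ ?M"
  proof unfold_locales
    show "fixpt I phi ?B1 < fixpt I phi ?B0" by (rule fixpt_Rmor_blocks_less)
    show "itin_prefix phi (phiw phi ?B0 x') Q (if x' \<le> Q then ?B1 else ?B0)"
      if "fixpt I phi ?B1 \<le> x'" "x' \<le> fixpt I phi ?B0" "phiw phi ?B1 x' \<le> Q" "Q < phiw phi ?B0 x'"
      for x' Q
      using itin_prefix_Rmor_block[OF p that] .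
    obtain R where "?M @ False # replicate p True = False # R"
      using word_morph_append_starts_False[of ?B0 ?B1 w'] by (auto simp: Rmor_eq_word_morph)
    then show "\<exists>R. True # False # replicate p True @ ?M @ False # replicate p True = True # ?B0 @ False # R"
      by simp
  qed (simp_all add: Rmor_eq_word_morph replicate_append_same)
  show ?thesis using periodic_window_if_renormalised window R.A2 by blast
qed

end

lemma word_morph_framed:
  assumes "\<And>c. \<exists>v. (if c then B1 else B0) = False # v @ [True]"
  shows "u \<noteq> [] \<Longrightarrow> \<exists>v. word_morph B0 B1 u = False # v @ [True]"
proof (induction u)
  case (Cons c u)
  obtain v where v: "(if c then B1 else B0) = False # v @ [True]" using assms by blast
  show ?case
  proof (cases "u = []")
    case False
    then obtain v' where "word_morph B0 B1 u = False # v' @ [True]" using Cons.IH by blast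
    then show ?thesis using v by (intro exI[of _ "v @ [True] @ False # v'"]) simp
  qed (use v in simp)
qed simp

lemma valid_cases: "valid u \<Longrightarrow> u = [False] \<or> u = [True] \<or> (\<exists>v. u = False # v @ [True])"
proof (induction rule: valid.induct)
  case (validL u p)
  have "\<exists>v. (if c then replicate p False @ [True] else replicate (Suc p) False @ [True]) =
      False # v @ [True]" for c
    using validL.hyps(2) by (cases c; cases p) auto
  then show ?case using word_morph_framed validL.IH unfolding Lmor_eq_word_morph by blast
next
  case (validR u p)
  have "\<exists>v. (if c then False # replicate (Suc p) True else False # replicate p True) =
      False # v @ [True]" for c
    using validR.hyps(2) by (cases c; cases p) (auto simp: replicate_append_same[symmetric])
  then show ?case using word_morph_framed validR.IH unfolding Rmor_eq_word_morph by blast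
qed auto

lemma periodic_window_valid:
  "valid u \<Longrightarrow> u = False # w @ [True] \<Longrightarrow> A2 I phi y0 y1 \<Longrightarrow> periodic_window w I phi"
proof (induction u arbitrary: w I phi y0 y1 rule: valid.induct)
  case (validL u p)
  interpret a2_system I phi y0 y1 by (rule a2_system.intro) (fact validL.prems(2))
  from valid_cases[OF validL.hyps(1)] show ?case
  proof (elim disjE exE)
    assume "u = [False]"
    then have "w = replicate (Suc p - 1) False" using validL.prems(1) by (simp add: Lmor_def)
    then show ?thesis using periodic_window_zeros[of "Suc p"] by simp
  next
    assume "u = [True]"
    then have "w = replicate (p - 1) False"
      using validL.prems(1) validL.hyps(2) by (cases p) (auto simp: Lmor_def)
    then show ?thesis using periodic_window_zeros validL.hyps(2) by blast
  next
    fix v assume u: "u = False # v @ [True]"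
    then have "w = replicate p False @ [True] @ Lmor p v @ replicate p False"
      using validL.prems(1) by (simp add: Lmor_eq_word_morph)
    then show ?thesis using periodic_window_Lmor validL.hyps(2) validL.IH u by blast
  qed
next
  case (validR u p)
  interpret a2_system I phi y0 y1 by (rule a2_system.intro) (fact validR.prems(2))
  from valid_cases[OF validR.hyps(1)] show ?case
  proof (elim disjE exE)
    assume "u = [False]"
    then have "w @ [True] = replicate p True" using validR.prems(1) by (simp add: Rmor_def)
    then have "w = replicate (p - 1) True"
      using validR.hyps(2) by (cases p) (auto simp: replicate_append_same[symmetric])
    then show ?thesis using periodic_window_ones validR.hyps(2) by blast
  next
    assume "u = [True]"
    then have "w @ [True] = replicate (Suc p) True" using validR.prems(1) by (simp add: Rmor_def)
    then have "w = replicate (Suc p - 1) True" by (simp add: replicate_append_same[symmetric])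
    then show ?thesis using periodic_window_ones[of "Suc p"] by simp
  next
    fix v assume u: "u = False # v @ [True]"
    then have "w = replicate p True @ Rmor p v @ False # replicate p True"
      using validR.prems(1) by (simp add: Rmor_eq_word_morph replicate_append_same[symmetric])
    then show ?thesis using periodic_window_Rmor validR.hyps(2) validR.IH u by blast
  qed
qed auto

section \<open>Valid words are primitive\<close>

abbreviation zeros :: "word \<Rightarrow> nat" where "zeros u \<equiv> length (filter (\<lambda>b. \<not> b) u)"
abbreviation ones :: "word \<Rightarrow> nat" where "ones u \<equiv> length (filter (\<lambda>b. b) u)"

lemma length_eq_zeros_plus_ones: "length u = zeros u + ones u"
  by (induction u) auto

lemma counts_Lmor: "ones (Lmor p u) = length u" "zeros (Lmor p u) = p * length u + zeros u"
  by (induction u) (auto simp: Lmor_def)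

lemma counts_Rmor: "zeros (Rmor p u) = length u" "ones (Rmor p u) = p * length u + ones u"
  by (induction u) (auto simp: Rmor_def)

lemma gcd_mult_sum_add: "gcd (p * (a + b) + a) (a + b) = gcd a (b::nat)"
proof -
  have "gcd (p * (a + b) + a) (a + b) = gcd a (a + b)"
    by (metis gcd.commute gcd_add_mult add.commute mult.commute)
  also have "\<dots> = gcd a b" by (metis gcd_add2 add.commute)
  finally show ?thesis .
qed

lemma valid_coprime_counts: "valid u \<Longrightarrow> coprime (zeros u) (ones u)"
proof (induction rule: valid.induct)
  case (validL u p)
  then show ?case
    using counts_Lmor[of p u] length_eq_zeros_plus_ones[of u] gcd_mult_sum_add[of p "zeros u" "ones u"]
    by (simp add: coprime_iff_gcd_eq_1)
next
  case (validR u p)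
  then show ?case
    using counts_Rmor[of p u] length_eq_zeros_plus_ones[of u] gcd_mult_sum_add[of p "ones u" "zeros u"]
    by (simp add: coprime_iff_gcd_eq_1 gcd.commute add.commute)
qed auto

lemma periodic_add_mult: "\<forall>i. f (i + r) = f i \<Longrightarrow> f (i + r * c) = f (i::nat)"
proof (induction c)
  case (Suc c)
  have "f (i + r * Suc c) = f ((i + r * c) + r)" by (simp add: algebra_simps)
  then show ?case using Suc by simp
qed simp

lemma periodic_mod: "\<forall>i. f (i + r) = f i \<Longrightarrow> f i = f (i mod (r::nat))"
  using periodic_add_mult[of f r "i mod r" "i div r"] by (metis mod_mult_div_eq add.commute mult.commute)

lemma periodic_gcd:
  assumes "\<forall>i. f (i + r) = f i" "\<forall>i. f (i + n) = f i" "r \<noteq> (0::nat)"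
  shows "f (i + gcd r n) = f i"
proof -
  obtain a b where ab: "r * a = n * b + gcd r n" using bezout_nat[OF assms(3)] by blast
  have "f (i + gcd r n) = f (i + gcd r n + n * b)" using periodic_add_mult[OF assms(2)] by simp
  also have "\<dots> = f (i + r * a)" using ab by (simp add: algebra_simps)
  also have "\<dots> = f i" using periodic_add_mult[OF assms(1)] by simp
  finally show ?thesis .
qed

lemma word_pow_take_if_periodic:
  assumes u: "u \<noteq> []" and fu: "\<forall>i. f i = u ! (i mod length u)"
    and g: "\<forall>i. f (i + g) = f i" "g dvd length u" "0 < g"
  shows "u = word_pow (take g u) (length u div g)"
proof (rule nth_equalityI)
  have len: "length (take g u) = g" using g u dvd_imp_le[of g "length u"] by simp
  then show "length u = length (word_pow (take g u) (length u div g))" using g by simp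
  fix i assume i: "i < length u"
  have "g \<le> length u" using g(2) u by (simp add: dvd_imp_le)
  then have "i mod g < length u" using mod_less_divisor[OF g(3), of i] by linarith
  then have "u ! (i mod g) = f (i mod g)" using fu by simp
  also have "\<dots> = u ! i" using periodic_mod[OF g(1)] fu i by simp
  finally show "u ! i = word_pow (take g u) (length u div g) ! i"
    using nth_word_pow[of i "length u div g" "take g u"] len g i by simp
qed

text \<open>A word with coprime letter counts is not a proper power, so it is the shortest word
  whose powers describe a given periodic pattern.\<close>

lemma shortest_period_if_coprime_counts:
  fixes f :: "nat \<Rightarrow> bool"
  assumes u: "u \<noteq> []" "coprime (zeros u) (ones u)" and fu: "\<forall>i. f i = u ! (i mod length u)"
    and v: "v \<noteq> []" "\<forall>i. f i = v ! (i mod length v)" "v \<noteq> u"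
  shows "length u < length v"
proof (rule ccontr)
  assume "\<not> length u < length v"
  then have le: "length v \<le> length u" by simp
  let ?g = "gcd (length v) (length u)"
  have "length v \<noteq> length u"
  proof
    assume "length v = length u"
    moreover have "u ! i = v ! i" if "i < length u" for i
    proof -
      have "f i = u ! (i mod length u)" "f i = v ! (i mod length v)" using fu v(2) by blast+
      then show ?thesis using that \<open>length v = length u\<close> by simp
    qed
    ultimately have "u = v" by (simp add: nth_equalityI)
    then show False using v(3) by simp
  qed
  moreover have "?g \<le> length v" using v(1) by (simp add: gcd_le1_nat)
  ultimately have g_less: "?g < length u" using le by linarith
  have g_pos: "0 < ?g" using v(1) by simp
  have "\<forall>i. f (i + length u) = f i" using fu by simp
  moreover have "\<forall>i. f (i + length v) = f i" using v(2) by simp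
  ultimately have "\<forall>i. f (i + ?g) = f i" using periodic_gcd[of f "length v" "length u"] v(1) by simp
  then have u_eq: "u = word_pow (take ?g u) (length u div ?g)"
    using word_pow_take_if_periodic[OF u(1) fu] g_pos by auto
  obtain k where k: "length u = ?g * k" using gcd_dvd2 by blast
  then have k_eq: "length u div ?g = k" using g_pos by (metis nonzero_mult_div_cancel_left less_not_refl2)
  have "k \<noteq> 0" using k u(1) by (metis length_0_conv mult_0_right)
  moreover have "k \<noteq> 1" using k g_less by (metis mult.right_neutral less_irrefl)
  ultimately have "2 \<le> k" by linarith
  have u_k: "u = word_pow (take ?g u) k" using u_eq k_eq by simp
  have "zeros u = k * zeros (take ?g u)"
    using arg_cong[OF u_k, of zeros] length_filter_word_pow by simp
  moreover have "ones u = k * ones (take ?g u)"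
    using arg_cong[OF u_k, of ones] length_filter_word_pow by simp
  ultimately have "is_unit k" by (intro coprime_common_divisor[OF u(2)]) simp_all
  then show False using \<open>2 \<le> k\<close> by simp
qed

section \<open>Threshold words\<close>

lemma funpow_if_orbit_step:
  "\<forall>k\<ge>1. t (Suc k) = f (t k) \<Longrightarrow> t (Suc m) = (f ^^ m) (t 1)"
  by (induction m) auto

context a2_system
begin

lemma thr_orbit_in_I: "x \<in> I \<Longrightarrow> thr_orbit phi x k \<in> I"
  by (induction k) (auto simp: phi_in_I)

lemma phi_iterates_tendsto: "z \<in> I \<Longrightarrow> (\<lambda>m. (phi c ^^ m) z) \<longlonglongrightarrow> fixpt I phi [c]"
  using iterates_tendsto_fixpt[of "[c]" z] by (simp add: comp_def)

lemma phi0_phi1_iterates_differ: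
  assumes "z \<in> I"
  shows "\<exists>m. (phi True ^^ m) z \<noteq> (phi False ^^ m) z"
proof (rule ccontr)
  assume "\<not> ?thesis"
  then have "(\<lambda>m. (phi True ^^ m) z) \<longlonglongrightarrow> y0"
    using phi_iterates_tendsto[OF assms, of False] fixpt_eqI[of "[False]" y0] y0_in_I phi0_y0 by simp
  moreover have "(\<lambda>m. (phi True ^^ m) z) \<longlonglongrightarrow> y1"
    using phi_iterates_tendsto[OF assms, of True] fixpt_eqI[of "[True]" y1] y1_in_I phi1_y1 by simp
  ultimately show False using LIMSEQ_unique y1_less_y0 by fastforce
qed

lemma threshold_word_single_letter:
  assumes xI: "x \<in> I" and pattern: "\<forall>k\<ge>1. (x \<le> thr_orbit phi x k) = c"
  shows "is_threshold_word phi x [c]"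
  unfolding is_threshold_word_def
proof (intro conjI allI impI)
  let ?t = "thr_orbit phi x"
  have step: "\<forall>k\<ge>1. ?t (Suc k) = phi c (?t k)" using pattern by simp
  then show "generates phi x [c]" unfolding generates_def by simp
  fix q assume q: "generates phi x q \<and> q \<noteq> [c]"
  show "length [c] < length q"
  proof (rule ccontr)
    assume "\<not> length [c] < length q"
    moreover have "q \<noteq> []" using q unfolding generates_def by blast
    ultimately have "q = [\<not> c]" using q by (cases q) auto
    then have "\<forall>k\<ge>1. ?t (Suc k) = phi (\<not> c) (?t k)" using q unfolding generates_def by simp
    then have "(phi (\<not> c) ^^ m) (?t 1) = (phi c ^^ m) (?t 1)" for m
      using funpow_if_orbit_step[OF step] funpow_if_orbit_step[of ?t "phi (\<not> c)"] by metis
    moreover obtain m where "(phi True ^^ m) (?t 1) \<noteq> (phi False ^^ m) (?t 1)"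
      using phi0_phi1_iterates_differ thr_orbit_in_I[OF xI] by blast
    ultimately show False by (cases c) metis+
  qed
qed

lemma threshold_word_0:
  assumes xI: "x \<in> I" and x: "y0 \<le> x"
  shows "is_threshold_word phi x [False]"
proof (rule threshold_word_single_letter[OF xI])
  let ?t = "thr_orbit phi x"
  have "?t k < x" if "k \<ge> 1" for k
    using that
  proof (induction k rule: dec_induct)
    case base
    show ?case using phi1_less[OF xI] y1_less_y0 x by simp
  next
    case (step k)
    have tI: "?t k \<in> I" using thr_orbit_in_I[OF xI] .
    have "phi False (?t k) < x"
    proof (cases "?t k < y0")
      case True
      then have "phi False (?t k) < phi False y0" using phi_strict_mono[OF tI y0_in_I] by blast
      then show ?thesis using phi0_y0 x by simp
    next
      case False
      then show ?thesis using phi0_le[OF tI] step by force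
    qed
    then show ?case using step by simp
  qed
  then show "\<forall>k\<ge>1. (x \<le> ?t k) = False" by force
qed

lemma threshold_word_1:
  assumes xI: "x \<in> I" and x: "x \<le> y1"
  shows "is_threshold_word phi x [True]"
proof (rule threshold_word_single_letter[OF xI])
  let ?t = "thr_orbit phi x"
  have "x \<le> ?t k" for k
  proof (induction k)
    case (Suc k)
    have tI: "?t k \<in> I" using thr_orbit_in_I[OF xI] .
    have "x \<le> phi True (?t k)"
    proof (cases "?t k \<le> y1")
      case True
      then show ?thesis using phi1_ge[OF tI] Suc by force
    next
      case False
      then have "phi True y1 \<le> phi True (?t k)" using phiw_mono[OF y1_in_I tI, where u="[True]"] by simp
      then show ?thesis using phi1_y1 x by simp
    qed
    then show ?case using Suc by simp
  qed simp
  then show "\<forall>k\<ge>1. (x \<le> ?t k) = True" by simp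
qed

end

lemma nth_rotate_right_mod:
  assumes "1 \<le> k"
  shows "(True # False # w) ! (k mod length (False # w @ [True])) =
         (False # w @ [True]) ! ((k - 1) mod length (False # w @ [True]))"
proof -
  let ?n = "length (False # w @ [True])"
  define j where "j = (k - 1) mod ?n"
  have "k = Suc (k - 1)" using assms by simp
  then have k_mod: "k mod ?n = (if Suc j = ?n then 0 else Suc j)"
    unfolding j_def by (metis mod_Suc)
  have "j < ?n" unfolding j_def by simp
  then have "(True # False # w) ! (k mod ?n) = (False # w @ [True]) ! j"
    using k_mod by (cases "Suc j = ?n") (auto simp: nth_append nth_Cons')
  then show ?thesis unfolding j_def .
qed

context a2_system
begin

lemma generates_iff_pattern:
  assumes x: "y1 \<le> x" "x \<le> y0"
  shows "generates phi x q \<longleftrightarrow>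
    q \<noteq> [] \<and> (\<forall>k\<ge>1. (x \<le> thr_orbit phi x k) = q ! ((k - 1) mod length q))"
proof -
  have box: "y1 \<le> thr_orbit phi x k \<and> thr_orbit phi x k \<le> y0" for k
    by (induction k) (use x phi_in_box in auto)
  have "phi a z = phi b z \<longleftrightarrow> a = b" if "y1 \<le> z" "z \<le> y0" for a b z
    using phi1_less_phi0[OF that] by (cases a; cases b) auto
  then have "thr_orbit phi x (Suc k) = phi c (thr_orbit phi x k) \<longleftrightarrow> (x \<le> thr_orbit phi x k) = c"
    for k c using box[of k] by simp
  then show ?thesis unfolding generates_def by metis
qed

text \<open>The letters of the pattern \<open>(10w)\<^sup>\<omega>\<close> at positions \<open>k \<ge> 1\<close> are those of \<open>(0w1)\<^sup>\<omega>\<close> at \<open>k - 1\<close>,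
  and position \<open>0\<close> reads \<open>1\<close> because \<open>x\<^sub>0 = x\<close>.\<close>

lemma itin_prefix_word_pow_iff_generates:
  assumes x: "y1 \<le> x" "x \<le> y0"
  shows "(\<forall>m. itin_prefix phi x x (word_pow (True # False # w) m)) \<longleftrightarrow>
    generates phi x (False # w @ [True])"
proof -
  let ?u = "True # False # w" and ?v = "False # w @ [True]" and ?t = "thr_orbit phi x"
  have "(\<forall>m. itin_prefix phi x x (word_pow ?u m)) \<longleftrightarrow> (\<forall>k. (x \<le> ?t k) = ?u ! (k mod length ?v))"
  proof
    assume "\<forall>m. itin_prefix phi x x (word_pow ?u m)"
    then have "(x \<le> ?t k) = word_pow ?u (Suc k) ! k" for k
      unfolding itin_prefix_self_iff by auto
    then show "\<forall>k. (x \<le> ?t k) = ?u ! (k mod length ?v)" using nth_word_pow[of _ "Suc _" ?u] by simp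
  next
    assume "\<forall>k. (x \<le> ?t k) = ?u ! (k mod length ?v)"
    then show "\<forall>m. itin_prefix phi x x (word_pow ?u m)"
      unfolding itin_prefix_self_iff using nth_word_pow[of _ _ ?u] by simp
  qed
  also have "\<dots> \<longleftrightarrow> (\<forall>k\<ge>1. (x \<le> ?t k) = ?v ! ((k - 1) mod length ?v))"
  proof -
    have split: "(\<forall>k. P k) \<longleftrightarrow> P 0 \<and> (\<forall>k\<ge>1. P k)" for P :: "nat \<Rightarrow> bool"
      by (metis One_nat_def Suc_leI neq0_conv)
    show ?thesis
      unfolding split[of "\<lambda>k. (x \<le> ?t k) = ?u ! (k mod length ?v)"]
      using nth_rotate_right_mod[of _ w] by simp
  qed
  also have "\<dots> \<longleftrightarrow> generates phi x ?v" using generates_iff_pattern[OF x] by simp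
  finally show ?thesis .
qed

lemma threshold_word_iff_generates:
  assumes x: "y1 \<le> x" "x \<le> y0" and u: "coprime (zeros u) (ones u)"
  shows "is_threshold_word phi x u \<longleftrightarrow> generates phi x u"
proof
  assume "generates phi x u"
  then have u_ne: "u \<noteq> []" and pat_u: "\<forall>i. (x \<le> thr_orbit phi x (Suc i)) = u ! (i mod length u)"
    using generates_iff_pattern[OF x] by auto
  have "length u < length v" if "generates phi x v" "v \<noteq> u" for v
  proof -
    have "v \<noteq> []" "\<forall>i. (x \<le> thr_orbit phi x (Suc i)) = v ! (i mod length v)"
      using that(1) generates_iff_pattern[OF x] by auto
    then show ?thesis using shortest_period_if_coprime_counts[OF u_ne u pat_u] that(2) by blast
  qed
  then show "is_threshold_word phi x u" unfolding is_threshold_word_def using \<open>generates phi x u\<close> by blast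
qed (simp add: is_threshold_word_def)

lemma threshold_word_valid_iff:
  assumes valid: "valid (False # w @ [True])" and xI: "x \<in> I"
  shows "is_threshold_word phi x (False # w @ [True]) \<longleftrightarrow>
    x \<in> {fixpt I phi (False # True # w) .. fixpt I phi (True # False # w)}"
proof -
  let ?v = "False # w @ [True]"
  have upper: "fixpt I phi (True # False # w) < y0" and lower: "y1 < fixpt I phi (False # True # w)"
    using fixpt_less_y0 fixpt_greater_y1 by simp_all
  consider "y0 \<le> x" | "x \<le> y1" | "y1 \<le> x" "x \<le> y0" by linarith
  then show ?thesis
  proof cases
    case 1
    then have "generates phi x [False]" using threshold_word_0 xI unfolding is_threshold_word_def by blast
    then show ?thesis using upper 1 unfolding is_threshold_word_def by fastforce
  next
    case 2
    then have "generates phi x [True]" using threshold_word_1 xI unfolding is_threshold_word_def by blast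
    then show ?thesis using lower 2 unfolding is_threshold_word_def by fastforce
  next
    case 3
    have "is_threshold_word phi x ?v \<longleftrightarrow> generates phi x ?v"
      using threshold_word_iff_generates[OF 3 valid_coprime_counts[OF valid]] .
    also have "\<dots> \<longleftrightarrow> (\<forall>m. itin_prefix phi x x (word_pow (True # False # w) m))"
      using itin_prefix_word_pow_iff_generates[OF 3] by simp
    also have "\<dots> \<longleftrightarrow> x \<in> {fixpt I phi (False # True # w) .. fixpt I phi (True # False # w)}"
      using periodic_window_valid[OF valid refl A2] xI unfolding periodic_window_def by blast
    finally show ?thesis .
  qed
qed

end

theorem proposition2:
  fixes I :: "real set" and phi :: "bool \<Rightarrow> real \<Rightarrow> real" and y0 y1 :: real
  assumes "A2 I phi y0 y1"
  shows "(\<forall>w x. valid (False # w @ [True]) \<longrightarrow> x \<in> I \<longrightarrow>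
            (is_threshold_word phi x (False # w @ [True]) \<longleftrightarrow>
             x \<in> {fixpt I phi ([False, True] @ w) .. fixpt I phi ([True, False] @ w)}))
       \<and> (\<forall>x\<in>I. y0 \<le> x \<longrightarrow> is_threshold_word phi x [False])
       \<and> (\<forall>x\<in>I. x \<le> y1 \<longrightarrow> is_threshold_word phi x [True])"
proof -
  interpret a2_system I phi y0 y1 using assms by unfold_locales
  show ?thesis using threshold_word_valid_iff threshold_word_0 threshold_word_1 by simp
qed

end
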